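(* Let $u_0\in H^4(\mathbb{R})$ be non-trivial and let $u$ be the solution of the Degasperis–Procesi equation with $u(x,0)=u_0(x)$, defined on $U=\mathbb{R}\times(0,T)$ where $T>0$ is its maximal existence time. Then $u$ is a generic solution of the Degasperis–Procesi equation, viewed as a $\mathcal{B}$-PSS equation of class $C^1$ with the one-forms below and $\mathcal{B}=C^0([0,T);H^4(\mathbb{R}))\cap C^1([0,T);H^3(\mathbb{R}))$.
   Context: The Degasperis–Procesi equation: $u_t+uu_x+\tfrac32\partial_x(1-\partial_x^2)^{-1}(u^2)=0$, with $(1-\partial_x^2)^{-1}f=G\ast f$, $G(x)=\tfrac12e^{-|x|}$ (equivalent, in $\mathcal{B}$, to $u_t-u_{txx}+4uu_x=3u_xu_{xx}+uu_{xxx}$). For $u_0\in H^4(\mathbb{R})$ there is a unique solution in $\mathcal{B}$ on a maximal interval $[0,T)$. With $m=u-u_{xx}$, $F=u_x^2-2uu_x+uu_{xx}$, real $\mu$ and a fixed sign choice: $\omega_1=m\,dx+F\,dt$, $\omega_2=(\mu m\pm2\sqrt{1+\mu^2})dx+\mu F\,dt$, $\omega_3=(\pm\sqrt{1+\mu^2}\,m+2\mu)dx\pm\sqrt{1+\mu^2}\,F\,dt$. Definition (generic solution): a function $u:U\to\mathbb{R}$ is a generic solution of a $\mathcal{B}$-PSS equation of class $C^k$ (with associated forms $\omega_i=f_{i1}dx+f_{i2}dt$ satisfying $d\omega_1=\omega_3\wedge\omega_2$, $d\omega_2=\omega_1\wedge\omega_3$, $d\omega_3=\omega_1\wedge\omega_2$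 on solutions) if (a) $u\in\mathcal{B}$; (b) $u$ is a solution of the equation; (c) the one-forms $\omega_i$ are $C^k$ on $U$; (d) there exists at least one simply connected open set $\Omega\subseteq U$ with $\omega_1\wedge\omega_2|_p\neq0$ for each $p\in\Omega$. *)

theory Defs
  imports "HOL-Analysis.Analysis"
begin

definition test_fun :: "(real \<Rightarrow> real) \<Rightarrow> bool" where
  "test_fun \<phi> \<longleftrightarrow> (\<forall>n x. ((deriv ^^ n) \<phi>) differentiable (at x)) \<and>
                    (\<exists>R. \<forall>x. R < \<bar>x\<bar> \<longrightarrow> \<phi> x = 0)"

definition sq_int :: "(real \<Rightarrow> real) \<Rightarrow> bool" where
  "sq_int f \<longleftrightarrow> f \<in> borel_measurable lborel \<and> integrable lborel (\<lambda>x. (f x)^2)"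

definition weak_deriv :: "nat \<Rightarrow> (real \<Rightarrow> real) \<Rightarrow> (real \<Rightarrow> real) \<Rightarrow> bool" where
  "weak_deriv n f g \<longleftrightarrow> (\<forall>\<phi>. test_fun \<phi> \<longrightarrow>
      integrable lborel (\<lambda>x. f x * (deriv ^^ n) \<phi> x) \<and>
      integrable lborel (\<lambda>x. g x * \<phi> x) \<and>
      (LINT x|lborel. f x * (deriv ^^ n) \<phi> x) = (-1)^n * (LINT x|lborel. g x * \<phi> x))"

definition Hk :: "nat \<Rightarrow> (real \<Rightarrow> real) \<Rightarrow> bool" where
  "Hk k f \<longleftrightarrow> sq_int f \<and> (\<forall>j\<le>k. \<exists>g. sq_int g \<and> weak_deriv j f g)"

definition Hk_norm :: "nat \<Rightarrow> (real \<Rightarrow> real) \<Rightarrow> real" where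
  "Hk_norm k f = sqrt (\<Sum>j\<le>k. LINT x|lborel. ((SOME g. sq_int g \<and> weak_deriv j f g) x)^2)"

definition Iv :: "ereal \<Rightarrow> real set" where
  "Iv T = {t. 0 \<le> t \<and> ereal t < T}"

text \<open>v : I \<rightarrow> H^k continuous (v t x = value of v(t) at x).\<close>
definition cont_Hk :: "nat \<Rightarrow> real set \<Rightarrow> (real \<Rightarrow> real \<Rightarrow> real) \<Rightarrow> bool" where
  "cont_Hk k I v \<longleftrightarrow> (\<forall>t\<in>I. Hk k (v t)) \<and>
     (\<forall>t\<in>I. ((\<lambda>s. Hk_norm k (\<lambda>x. v s x - v t x)) \<longlongrightarrow> 0) (at t within I))"

definition time_deriv_Hk :: "nat \<Rightarrow> real set \<Rightarrow> (real \<Rightarrow> real \<Rightarrow> real) \<Rightarrow> (real \<Rightarrow> real \<Rightarrow> real) \<Rightarrow> bool" where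
  "time_deriv_Hk k I v w \<longleftrightarrow> (\<forall>t\<in>I. Hk k (w t) \<and>
     ((\<lambda>s. Hk_norm k (\<lambda>x. (v s x - v t x) / (s - t) - w t x)) \<longlongrightarrow> 0) (at t within I))"

definition C1_Hk :: "nat \<Rightarrow> real set \<Rightarrow> (real \<Rightarrow> real \<Rightarrow> real) \<Rightarrow> bool" where
  "C1_Hk k I v \<longleftrightarrow> cont_Hk k I v \<and> (\<exists>w. time_deriv_Hk k I v w \<and> cont_Hk k I w)"

text \<open>Membership in B on [0,T). Each u(t) is represented by its continuous
  representative (exists by Sobolev embedding H^4 \<subseteq> C^3).\<close>
definition Bsp :: "ereal \<Rightarrow> (real \<Rightarrow> real \<Rightarrow> real) \<Rightarrow> bool" where
  "Bsp T u \<longleftrightarrow> cont_Hk 4 (Iv T) u \<and> C1_Hk 3 (Iv T) u \<and>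
     (\<forall>t\<in>Iv T. continuous_on UNIV (u t))"

definition Gk :: "real \<Rightarrow> real" where
  "Gk x = exp (- \<bar>x\<bar>) / 2"

definition DP_sol :: "ereal \<Rightarrow> (real \<Rightarrow> real \<Rightarrow> real) \<Rightarrow> bool" where
  "DP_sol T u \<longleftrightarrow> (\<exists>w. time_deriv_Hk 3 (Iv T) u w \<and>
     (\<forall>t\<in>Iv T. AE x in lborel.
        w t x + u t x * deriv (u t) x
        + 3/2 * deriv (\<lambda>z. LINT y|lborel. Gk (z - y) * (u t y)^2) x = 0))"

text \<open>Points of U are pairs (x,t).\<close>
definition Udom :: "ereal \<Rightarrow> (real \<times> real) set" where
  "Udom T = {(x,t). 0 < t \<and> ereal t < T}"

definition mDP :: "(real \<Rightarrow> real \<Rightarrow> real) \<Rightarrow> real \<times> real \<Rightarrow> real" where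
  "mDP u p = (case p of (x,t) \<Rightarrow> u t x - deriv (deriv (u t)) x)"

definition FDP :: "(real \<Rightarrow> real \<Rightarrow> real) \<Rightarrow> real \<times> real \<Rightarrow> real" where
  "FDP u p = (case p of (x,t) \<Rightarrow>
      (deriv (u t) x)^2 - 2 * u t x * deriv (u t) x + u t x * deriv (deriv (u t)) x)"

text \<open>Coefficients f_{i1} (dx) and f_{i2} (dt) of omega_i; s is the sign choice (\<plusminus>1).\<close>
definition f11 :: "(real \<Rightarrow> real \<Rightarrow> real) \<Rightarrow> real \<times> real \<Rightarrow> real" where
  "f11 u p = mDP u p"
definition f12 :: "(real \<Rightarrow> real \<Rightarrow> real) \<Rightarrow> real \<times> real \<Rightarrow> real" where
  "f12 u p = FDP u p"
definition f21 :: "real \<Rightarrow> real \<Rightarrow> (real \<Rightarrow> real \<Rightarrow> real) \<Rightarrow> real \<times> real \<Rightarrow> real" where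
  "f21 \<mu> s u p = \<mu> * mDP u p + s * 2 * sqrt (1 + \<mu>^2)"
definition f22 :: "real \<Rightarrow> real \<Rightarrow> (real \<Rightarrow> real \<Rightarrow> real) \<Rightarrow> real \<times> real \<Rightarrow> real" where
  "f22 \<mu> s u p = \<mu> * FDP u p"
definition f31 :: "real \<Rightarrow> real \<Rightarrow> (real \<Rightarrow> real \<Rightarrow> real) \<Rightarrow> real \<times> real \<Rightarrow> real" where
  "f31 \<mu> s u p = s * sqrt (1 + \<mu>^2) * mDP u p + 2 * \<mu>"
definition f32 :: "real \<Rightarrow> real \<Rightarrow> (real \<Rightarrow> real \<Rightarrow> real) \<Rightarrow> real \<times> real \<Rightarrow> real" where
  "f32 \<mu> s u p = s * sqrt (1 + \<mu>^2) * FDP u p"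

definition C1_on :: "(real \<times> real) set \<Rightarrow> (real \<times> real \<Rightarrow> real) \<Rightarrow> bool" where
  "C1_on U f \<longleftrightarrow> (\<exists>fx ft. continuous_on U fx \<and> continuous_on U ft \<and>
     (\<forall>p\<in>U. (f has_derivative (\<lambda>(h,k). fx p * h + ft p * k)) (at p)))"

definition generic_DP_sol :: "ereal \<Rightarrow> real \<Rightarrow> real \<Rightarrow> (real \<Rightarrow> real \<Rightarrow> real) \<Rightarrow> bool" where
  "generic_DP_sol T \<mu> s u \<longleftrightarrow>
     Bsp T u \<and> DP_sol T u \<and>
     C1_on (Udom T) (f11 u) \<and> C1_on (Udom T) (f12 u) \<and>
     C1_on (Udom T) (f21 \<mu> s u) \<and> C1_on (Udom T) (f22 \<mu> s u) \<and>
     C1_on (Udom T) (f31 \<mu> s u) \<and> C1_on (Udom T) (f32 \<mu> s u) \<and>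
     (\<exists>\<Omega>. open \<Omega> \<and> \<Omega> \<noteq> {} \<and> simply_connected \<Omega> \<and> \<Omega> \<subseteq> Udom T \<and>
        (\<forall>p\<in>\<Omega>. f11 u p * f22 \<mu> s u p - f12 u p * f21 \<mu> s u p \<noteq> 0))"

end

theory Submission
  imports Defs "HOL-Computational_Algebra.Polynomial" "HOL-Probability.Distribution_Functions"
begin

(* The membership u in B alone gives the regularity: by the one-dimensional Sobolev embedding,
   a function in H^(k+1) is C^k, and convergence in H^(k+1) controls the first k derivatives
   uniformly.  Applied to u(t) in H^4 and to the time derivative u_t(t) in H^3, this makes
   u, u_x, u_xx, u_xxx and the time derivatives of u, u_x, u_xx jointly continuous on U, so
   m = u - u_xx and F = u_x^2 - 2 u u_x + u u_xx, and with them all coefficients of the forms,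
   are C^1.  The coefficient of dx dt in omega_1 wedge omega_2 is -2 s sqrt(1 + mu^2) F,
   so it suffices that F does not vanish identically on U.  If it did, every v = u(t) would satisfy
   (v v' e^(-2x))' = F e^(-2x) = 0, hence v^2 = C e^(2x) + D, which is square integrable only
   for v = 0; continuity of u in H^4 at t = 0 would then force u_0 = 0 almost everywhere. *)

section \<open>Smooth functions and bump functions\<close>

lemma deriv_eqI:
  fixes f :: "real \<Rightarrow> real"
  assumes "\<And>x. (f has_real_derivative f' x) (at x)"
  shows "deriv f = f'"
  using assms by (intro ext DERIV_imp_deriv)

lemma deriv_add_fun:
  fixes f g :: "real \<Rightarrow> real"
  assumes "\<And>x. f differentiable (at x)" "\<And>x. g differentiable (at x)"
  shows "deriv (\<lambda>x. f x + g x) = (\<lambda>x. deriv f x + deriv g x)"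
  using assms by (intro deriv_eqI derivative_intros) (auto simp: DERIV_deriv_iff_real_differentiable)

lemma deriv_mult_fun:
  fixes f g :: "real \<Rightarrow> real"
  assumes "\<And>x. f differentiable (at x)" "\<And>x. g differentiable (at x)"
  shows "deriv (\<lambda>x. f x * g x) = (\<lambda>x. deriv f x * g x + f x * deriv g x)"
  using assms by (intro deriv_eqI derivative_eq_intros)
    (auto simp: DERIV_deriv_iff_real_differentiable[symmetric])

fun differentiable_upto :: "nat \<Rightarrow> (real \<Rightarrow> real) \<Rightarrow> bool" where
  "differentiable_upto 0 f \<longleftrightarrow> (\<forall>x. f differentiable (at x))"
| "differentiable_upto (Suc n) f \<longleftrightarrow>
     (\<forall>x. f differentiable (at x)) \<and> differentiable_upto n (deriv f)"

definition smooth :: "(real \<Rightarrow> real) \<Rightarrow> bool" where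
  "smooth f \<longleftrightarrow> (\<forall>n x. (deriv ^^ n) f differentiable (at x))"

lemma differentiable_upto_iff:
  "differentiable_upto n f \<longleftrightarrow> (\<forall>k\<le>n. \<forall>x. (deriv ^^ k) f differentiable (at x))"
proof (induction n arbitrary: f)
  case 0
  then show ?case by simp
next
  case (Suc n)
  have "(\<forall>k\<le>Suc n. \<forall>x. (deriv ^^ k) f differentiable (at x)) \<longleftrightarrow>
        (\<forall>x. f differentiable (at x)) \<and> (\<forall>k\<le>n. \<forall>x. (deriv ^^ Suc k) f differentiable (at x))"
    by (metis (no_types, lifting) Suc_le_mono funpow_0 le0 not0_implies_Suc)
  with Suc show ?case by (simp add: funpow_Suc_right del: funpow.simps)
qed

lemma smooth_iff_differentiable_upto: "smooth f \<longleftrightarrow> (\<forall>n. differentiable_upto n f)"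
  unfolding smooth_def differentiable_upto_iff by blast

lemma differentiable_upto_SucD: "differentiable_upto (Suc n) f \<Longrightarrow> differentiable_upto n f"
  by (auto simp: differentiable_upto_iff)

lemma differentiable_upto_add:
  "differentiable_upto n f \<Longrightarrow> differentiable_upto n g \<Longrightarrow> differentiable_upto n (\<lambda>x. f x + g x)"
proof (induction n arbitrary: f g)
  case (Suc n)
  then show ?case by (auto simp: deriv_add_fun)
qed auto

lemma differentiable_upto_const: "differentiable_upto n (\<lambda>x. c)"
  by (induction n arbitrary: c) auto

lemma differentiable_upto_mult:
  "differentiable_upto n f \<Longrightarrow> differentiable_upto n g \<Longrightarrow> differentiable_upto n (\<lambda>x. f x * g x)"
proof (induction n arbitrary: f g)
  case (Suc n)
  have "differentiable_upto n (\<lambda>x. deriv f x * g x)" "differentiable_upto n (\<lambda>x. f x * deriv g x)"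
    using Suc.IH Suc.prems differentiable_upto_SucD by auto
  with Suc.prems show ?case by (auto simp: deriv_mult_fun intro!: differentiable_upto_add)
qed auto

lemma differentiable_upto_affine:
  "differentiable_upto n f \<Longrightarrow> differentiable_upto n (\<lambda>x. f (a * x + b))"
proof (induction n arbitrary: f)
  have chain: "((\<lambda>x. f (a * x + b)) has_real_derivative deriv f (a * x + b) * a) (at x)"
    if "\<And>y. f differentiable (at y)" for f :: "real \<Rightarrow> real" and x
    using that by (auto intro!: derivative_eq_intros DERIV_chain2[where f=f]
        simp: DERIV_deriv_iff_real_differentiable)
  {
    case 0
    then show ?case using chain real_differentiable_def by auto
  next
    case (Suc n)
    then have "deriv (\<lambda>x. f (a * x + b)) = (\<lambda>x. deriv f (a * x + b) * a)"
      using chain by (intro deriv_eqI) auto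
    with Suc show ?case
      using chain real_differentiable_def by (auto intro!: differentiable_upto_mult differentiable_upto_const)
  }
qed

lemma differentiable_upto_inverse:
  "differentiable_upto n g \<Longrightarrow> (\<And>x. g x \<noteq> 0) \<Longrightarrow> differentiable_upto n (\<lambda>x. 1 / g x)"
proof (induction n arbitrary: g)
  case 0
  then show ?case
    by (auto simp: real_differentiable_def intro!: exI derivative_eq_intros
        DERIV_deriv_iff_real_differentiable[THEN iffD2])
next
  case (Suc n)
  have d: "((\<lambda>x. 1 / g x) has_real_derivative - deriv g x * (1 / g x) * (1 / g x)) (at x)" for x
    using Suc.prems
    by (auto intro!: derivative_eq_intros simp: DERIV_deriv_iff_real_differentiable power2_eq_square)
  then have "deriv (\<lambda>x. 1 / g x) = (\<lambda>x. - deriv g x * (1 / g x) * (1 / g x))"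
    by (rule deriv_eqI)
  moreover have "differentiable_upto n (\<lambda>x. - deriv g x * (1 / g x) * (1 / g x))"
  proof -
    have "differentiable_upto n (\<lambda>x. 1 / g x)" using Suc differentiable_upto_SucD by blast
    moreover have "differentiable_upto n (\<lambda>x. - deriv g x)"
      using Suc.prems differentiable_upto_mult[of n "\<lambda>x. -1" "deriv g"]
      by (simp add: differentiable_upto_const)
    ultimately show ?thesis by (intro differentiable_upto_mult)
  qed
  ultimately show ?case using d real_differentiable_def by auto
qed

lemma smooth_add: "smooth f \<Longrightarrow> smooth g \<Longrightarrow> smooth (\<lambda>x. f x + g x)"
  by (simp add: smooth_iff_differentiable_upto differentiable_upto_add)

lemma smooth_mult: "smooth f \<Longrightarrow> smooth g \<Longrightarrow> smooth (\<lambda>x. f x * g x)"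
  by (simp add: smooth_iff_differentiable_upto differentiable_upto_mult)

lemma smooth_const: "smooth (\<lambda>x. c)"
  by (simp add: smooth_iff_differentiable_upto differentiable_upto_const)

lemma smooth_affine: "smooth f \<Longrightarrow> smooth (\<lambda>x. f (a * x + b))"
  by (simp add: smooth_iff_differentiable_upto differentiable_upto_affine)

lemma smooth_inverse: "smooth g \<Longrightarrow> (\<And>x. g x \<noteq> 0) \<Longrightarrow> smooth (\<lambda>x. 1 / g x)"
  by (simp add: smooth_iff_differentiable_upto differentiable_upto_inverse)

lemma smooth_cmult: "smooth f \<Longrightarrow> smooth (\<lambda>x. c * f x)"
  using smooth_mult[OF smooth_const] by blast

lemma smooth_diff: "smooth f \<Longrightarrow> smooth g \<Longrightarrow> smooth (\<lambda>x. f x - g x)"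
  using smooth_add[of f "\<lambda>x. (-1) * g x"] smooth_cmult[of g "-1"] by simp

lemma smooth_imp_differentiable: "smooth f \<Longrightarrow> f differentiable (at x)"
  unfolding smooth_def by (metis funpow_0)

lemma smooth_imp_has_deriv: "smooth f \<Longrightarrow> (f has_real_derivative deriv f x) (at x)"
  by (simp add: DERIV_deriv_iff_real_differentiable smooth_imp_differentiable)

lemma smooth_imp_continuous: "smooth f \<Longrightarrow> continuous_on UNIV f"
  by (meson continuous_at_imp_continuous_on differentiable_imp_continuous_within
      smooth_imp_differentiable)

lemma smooth_deriv: "smooth f \<Longrightarrow> smooth (deriv f)"
  unfolding smooth_def by (metis funpow_Suc_right o_apply)

lemma smooth_if_smooth_derivative:
  assumes "smooth f'" "\<And>x. (F has_real_derivative f' x) (at x)"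
  shows "smooth F"
proof -
  have "deriv F = f'" using assms(2) by (rule deriv_eqI)
  then have "differentiable_upto n F" for n
    using assms real_differentiable_def smooth_iff_differentiable_upto by (cases n) auto
  then show ?thesis by (simp add: smooth_iff_differentiable_upto)
qed

lemma smooth_derivative_family:
  fixes F :: "nat \<Rightarrow> real \<Rightarrow> real"
  assumes "\<And>n x. (F n has_real_derivative F (Suc n) x) (at x)"
  shows "smooth (F 0)"
proof -
  have "(deriv ^^ n) (F 0) = F n" for n
    by (induction n) (auto intro: deriv_eqI assms)
  then show ?thesis unfolding smooth_def using assms real_differentiable_def by metis
qed

lemma poly_times_exp_neg_tendsto_0: "((\<lambda>z. poly p z * exp (-z)) \<longlongrightarrow> (0::real)) at_top"
proof -
  have "((\<lambda>z. \<Sum>i\<le>degree p. coeff p i * (z ^ i / exp z)) \<longlongrightarrow> (\<Sum>i\<le>degree p. coeff p i * 0)) at_top"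
    by (intro tendsto_sum tendsto_mult tendsto_const tendsto_power_div_exp_0)
  moreover have "(\<lambda>z. \<Sum>i\<le>degree p. coeff p i * (z ^ i / exp z)) = (\<lambda>z. poly p z * exp (-z))"
    by (rule ext) (simp add: poly_altdef sum_distrib_right exp_minus divide_inverse mult.assoc)
  ultimately show ?thesis by simp
qed

text \<open>The \<open>n\<close>-th derivative of \<open>x \<mapsto> exp (-1/x)\<close> (extended by \<open>0\<close> to \<open>x \<le> 0\<close>) has
  the form \<open>p\<^sub>n(1/x) exp (-1/x)\<close>, with \<open>p\<^sub>n\<^sub>+\<^sub>1(y) = y\<^sup>2 (p\<^sub>n(y) - p\<^sub>n'(y))\<close>.\<close>

fun exp_inv_poly :: "nat \<Rightarrow> real poly" where
  "exp_inv_poly 0 = 1"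
| "exp_inv_poly (Suc n) = [:0,0,1:] * (exp_inv_poly n - pderiv (exp_inv_poly n))"

definition exp_inv_deriv :: "nat \<Rightarrow> real \<Rightarrow> real" where
  "exp_inv_deriv n x = (if 0 < x then poly (exp_inv_poly n) (1/x) * exp (-1/x) else 0)"

lemma exp_inv_deriv_pos:
  assumes "0 < x"
  shows "(exp_inv_deriv n has_real_derivative exp_inv_deriv (Suc n) x) (at x)"
proof -
  let ?P = "exp_inv_poly n"
  have d: "((\<lambda>y. poly ?P (1/y) * exp (-1/y)) has_real_derivative
      poly (pderiv ?P) (1/x) * (- 1 / x^2) * exp (-1/x) + poly ?P (1/x) * (exp (-1/x) * (1/x^2))) (at x)"
    using assms
    by (auto intro!: derivative_eq_intros DERIV_chain2[where f="poly ?P"] simp: power2_eq_square)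
  have e: "poly (pderiv ?P) (1/x) * (- 1 / x^2) * exp (-1/x) + poly ?P (1/x) * (exp (-1/x) * (1/x^2))
      = exp_inv_deriv (Suc n) x"
    using assms by (simp add: exp_inv_deriv_def poly_mult poly_diff field_simps power2_eq_square)
  show ?thesis
  proof (rule has_field_derivative_transform_within_open[where S="{0<..}"])
    show "((\<lambda>y. poly ?P (1/y) * exp (-1/y)) has_real_derivative exp_inv_deriv (Suc n) x) (at x)"
      using d e by simp
  qed (use assms in \<open>auto simp: exp_inv_deriv_def\<close>)
qed

lemma exp_inv_deriv_neg:
  assumes "x < 0"
  shows "(exp_inv_deriv n has_real_derivative exp_inv_deriv (Suc n) x) (at x)"
proof (rule has_field_derivative_transform_within_open[where S="{..<0}" and f="\<lambda>_. 0"])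
  show "((\<lambda>_. 0) has_real_derivative exp_inv_deriv (Suc n) x) (at x)"
    using assms by (simp add: exp_inv_deriv_def)
qed (use assms in \<open>auto simp: exp_inv_deriv_def\<close>)

lemma exp_inv_deriv_0: "(exp_inv_deriv n has_real_derivative exp_inv_deriv (Suc n) 0) (at 0)"
proof -
  let ?q = "\<lambda>y. (exp_inv_deriv n y - exp_inv_deriv n 0) / (y - 0)"
  have "(?q \<longlongrightarrow> 0) (at_left 0)"
  proof (rule Lim_transform_eventually[where f="\<lambda>_. 0"])
    show "\<forall>\<^sub>F x in at_left 0. 0 = ?q x"
      unfolding eventually_at_filter by (auto simp: exp_inv_deriv_def)
  qed simp
  moreover have "(?q \<longlongrightarrow> 0) (at_right 0)"
  proof -
    have "((\<lambda>y. poly (pCons 0 (exp_inv_poly n)) (inverse y) * exp (- inverse y)) \<longlongrightarrow> (0::real))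
        (at_right 0)"
      using poly_times_exp_neg_tendsto_0 filterlim_inverse_at_top_right by (rule filterlim_compose)
    then show ?thesis
    proof (rule Lim_transform_eventually)
      show "\<forall>\<^sub>F x in at_right 0. poly (pCons 0 (exp_inv_poly n)) (inverse x) * exp (- inverse x) = ?q x"
        unfolding eventually_at_filter by (auto simp: exp_inv_deriv_def field_simps)
    qed
  qed
  ultimately have "(?q \<longlongrightarrow> 0) (at 0)"
    by (simp add: filterlim_at_split)
  then show ?thesis by (simp add: has_field_derivative_iff exp_inv_deriv_def)
qed

lemma exp_inv_deriv_has_deriv:
  "(exp_inv_deriv n has_real_derivative exp_inv_deriv (Suc n) x) (at x)"
  using exp_inv_deriv_pos exp_inv_deriv_neg exp_inv_deriv_0 by (cases "x < 0"; cases "x = 0") auto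

definition exp_inv :: "real \<Rightarrow> real" where "exp_inv = exp_inv_deriv 0"

lemma exp_inv_eq: "exp_inv x = (if 0 < x then exp (-1/x) else 0)"
  by (simp add: exp_inv_def exp_inv_deriv_def)

lemma smooth_exp_inv: "smooth exp_inv"
  unfolding exp_inv_def by (rule smooth_derivative_family[where F=exp_inv_deriv, OF exp_inv_deriv_has_deriv])

definition smooth_step :: "real \<Rightarrow> real" where
  "smooth_step x = exp_inv x * (1 / (exp_inv x + exp_inv (-1 * x + 1)))"

lemma smooth_step_denominator_pos: "exp_inv x + exp_inv (-1 * x + 1) > 0"
  by (cases "0 < x") (auto simp: exp_inv_eq add_pos_nonneg add_nonneg_pos)

lemma smooth_smooth_step: "smooth smooth_step"
  unfolding smooth_step_def[abs_def]
  using smooth_step_denominator_pos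
  by (intro smooth_mult smooth_inverse smooth_add smooth_affine smooth_exp_inv) (auto simp: less_le)

lemma smooth_step_nonpos: "x \<le> 0 \<Longrightarrow> smooth_step x = 0"
  by (simp add: smooth_step_def exp_inv_eq)

lemma smooth_step_ge_1: "1 \<le> x \<Longrightarrow> smooth_step x = 1"
  using smooth_step_denominator_pos[of x] by (simp add: smooth_step_def exp_inv_eq)

lemma smooth_step_bounds: "0 \<le> smooth_step x" "smooth_step x \<le> 1"
  using smooth_step_denominator_pos[of x] by (simp_all add: smooth_step_def exp_inv_eq)

lemma test_funI: "smooth f \<Longrightarrow> (\<And>x. R < \<bar>x\<bar> \<Longrightarrow> f x = 0) \<Longrightarrow> test_fun f"
  unfolding test_fun_def smooth_def by blast

lemma test_fun_smooth: "test_fun f \<Longrightarrow> smooth f"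
  unfolding test_fun_def smooth_def by blast

lemma test_fun_support: "test_fun \<phi> \<Longrightarrow> \<exists>R. \<forall>x. R < \<bar>x\<bar> \<longrightarrow> \<phi> x = 0"
  unfolding test_fun_def by blast

lemma test_fun_continuous: "test_fun \<phi> \<Longrightarrow> continuous_on UNIV \<phi>"
  using smooth_imp_continuous test_fun_smooth by blast

lemma test_fun_has_deriv: "test_fun \<phi> \<Longrightarrow> (\<phi> has_real_derivative deriv \<phi> x) (at x)"
  using smooth_imp_has_deriv test_fun_smooth by blast

lemma deriv_locally_const:
  fixes f :: "real \<Rightarrow> real"
  assumes "open S" "x \<in> S" "\<And>y. y \<in> S \<Longrightarrow> f y = c"
  shows "deriv f x = 0"
proof -
  have "(f has_real_derivative 0) (at x)"
    by (rule has_field_derivative_transform_within_open[where f="\<lambda>_. c" and S=S]) (use assms in auto)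
  then show ?thesis by (rule DERIV_imp_deriv)
qed

lemma test_fun_deriv: "test_fun \<phi> \<Longrightarrow> test_fun (deriv \<phi>)"
proof -
  assume t: "test_fun \<phi>"
  obtain R where R: "\<And>x. R < \<bar>x\<bar> \<Longrightarrow> \<phi> x = 0" using test_fun_support[OF t] by blast
  have "open {y. R < \<bar>y\<bar>}" by (intro open_Collect_less continuous_intros)
  then have "deriv \<phi> x = 0" if "R < \<bar>x\<bar>" for x
    using that R by (intro deriv_locally_const[where c=0]) auto
  then show ?thesis using smooth_deriv[OF test_fun_smooth[OF t]] by (intro test_funI) auto
qed

lemma test_fun_derivs_continuous: "test_fun \<phi> \<Longrightarrow> continuous_on UNIV ((deriv ^^ j) \<phi>)"
  unfolding test_fun_def
  by (meson continuous_at_imp_continuous_on differentiable_imp_continuous_within)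

lemma test_fun_lin:
  assumes "test_fun \<phi>" "test_fun \<psi>"
  shows "test_fun (\<lambda>x. a * \<phi> x + b * \<psi> x)"
proof -
  obtain R1 where R1: "\<And>x. R1 < \<bar>x\<bar> \<Longrightarrow> \<phi> x = 0" using test_fun_support[OF assms(1)] by blast
  obtain R2 where R2: "\<And>x. R2 < \<bar>x\<bar> \<Longrightarrow> \<psi> x = 0" using test_fun_support[OF assms(2)] by blast
  show ?thesis
    by (rule test_funI[where R="max R1 R2"])
      (use R1 R2 test_fun_smooth[OF assms(1)] test_fun_smooth[OF assms(2)] in
       \<open>auto intro!: smooth_add smooth_cmult\<close>)
qed

definition smooth_box :: "real \<Rightarrow> real \<Rightarrow> real \<Rightarrow> real \<Rightarrow> real" where
  "smooth_box a b e x = smooth_step ((x - a) / e) - smooth_step ((x - b) / e)"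

lemma smooth_box_outside:
  assumes "0 < e" "a \<le> b" "x \<notin> {a..b+e}"
  shows "smooth_box a b e x = 0"
proof (cases "x < a")
  case True
  then have "(x - a)/e \<le> 0" "(x - b)/e \<le> 0" using assms by (auto simp: divide_nonpos_pos)
  then show ?thesis by (simp add: smooth_box_def smooth_step_nonpos)
next
  case False
  then have "1 \<le> (x - a)/e" "1 \<le> (x - b)/e" using assms by auto
  then show ?thesis by (simp add: smooth_box_def smooth_step_ge_1)
qed

lemma test_fun_smooth_box:
  assumes "0 < e" "a \<le> b"
  shows "test_fun (smooth_box a b e)"
proof (rule test_funI[where R="\<bar>a\<bar> + \<bar>b\<bar> + e"])
  have "(\<lambda>x. smooth_step ((1/e) * x + (-c/e))) = (\<lambda>x. smooth_step ((x-c)/e))" for c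
    by (rule ext) (simp add: diff_divide_distrib)
  then have "smooth (\<lambda>x. smooth_step ((x-c)/e))" for c
    using smooth_affine[OF smooth_smooth_step, of "1/e" "-c/e"] by simp
  then show "smooth (smooth_box a b e)"
    unfolding smooth_box_def[abs_def] by (intro smooth_diff)
qed (use assms in \<open>auto intro!: smooth_box_outside\<close>)

lemma smooth_box_bound: "\<bar>smooth_box a b e x\<bar> \<le> 1"
  using smooth_step_bounds unfolding smooth_box_def by (smt (verit))

lemma eventually_inverse_Suc_le:
  assumes "0 < d"
  shows "\<forall>\<^sub>F n in sequentially. 1 / real (Suc n) \<le> d"
proof -
  obtain N :: nat where "1 / d < real N" using reals_Archimedean2 by blast
  then have "1 / real (Suc n) \<le> d" if "N \<le> n" for n
    using assms that by (simp add: field_simps) (smt (verit) of_nat_mono mult_left_mono)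
  then show ?thesis by (auto intro: eventually_sequentiallyI)
qed

lemma smooth_box_tendsto_indicator:
  assumes "a \<le> b"
  shows "(\<lambda>n. smooth_box a b (1 / real (Suc n)) x) \<longlonglongrightarrow> indicator {a<..b} x"
proof -
  consider "x \<le> a" | "a < x" "x \<le> b" | "b < x" by linarith
  then have "\<forall>\<^sub>F n in sequentially. smooth_box a b (1 / real (Suc n)) x = indicator {a<..b} x"
  proof cases
    case 1
    then show ?thesis using assms
      by (intro always_eventually allI) (simp add: smooth_box_def smooth_step_nonpos mult_nonpos_nonneg)
  next
    case 2
    from 2 have "\<forall>\<^sub>F n in sequentially. 1 / real (Suc n) \<le> x - a"
      by (intro eventually_inverse_Suc_le) simp
    then show ?thesis
    proof (elim eventually_mono)
      fix n assume n: "1 / real (Suc n) \<le> x - a"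
      have "(x - b) / (1 / real (Suc n)) \<le> 0" using 2 by (simp add: mult_nonpos_nonneg)
      moreover have "1 \<le> (x - a) / (1 / real (Suc n))" using n by (simp add: field_simps)
      ultimately show "smooth_box a b (1 / real (Suc n)) x = indicator {a<..b} x"
        using 2 by (simp add: smooth_box_def smooth_step_nonpos smooth_step_ge_1)
    qed
  next
    case 3
    from 3 have "\<forall>\<^sub>F n in sequentially. 1 / real (Suc n) \<le> x - b"
      by (intro eventually_inverse_Suc_le) simp
    then show ?thesis
    proof (elim eventually_mono)
      fix n assume n: "1 / real (Suc n) \<le> x - b"
      then have b1: "1 \<le> (x - b) / (1 / real (Suc n))" by (simp add: field_simps)
      moreover have "(x - b) / (1 / real (Suc n)) \<le> (x - a) / (1 / real (Suc n))"
        using assms by (intro divide_right_mono) auto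
      ultimately have a1: "1 \<le> (x - a) / (1 / real (Suc n))" by linarith
      show "smooth_box a b (1 / real (Suc n)) x = indicator {a<..b} x"
        using 3 smooth_step_ge_1[OF a1] smooth_step_ge_1[OF b1] by (simp add: smooth_box_def)
    qed
  qed
  then show ?thesis by (rule tendsto_eventually)
qed

definition bump :: "real \<Rightarrow> real" where "bump = deriv smooth_step"

lemma bump_outside: "x \<notin> {0..1} \<Longrightarrow> bump x = 0"
proof (cases "x < 0")
  case True
  then show ?thesis unfolding bump_def
    by (intro deriv_locally_const[where S="{..<0}" and c=0]) (auto simp: smooth_step_nonpos)
next
  case False
  moreover assume "x \<notin> {0..1}"
  ultimately show ?thesis unfolding bump_def
    by (intro deriv_locally_const[where S="{1<..}" and c=1]) (auto simp: smooth_step_ge_1)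
qed

lemma test_fun_bump: "test_fun bump"
proof (rule test_funI[where R=1])
  show "smooth bump" by (simp add: bump_def smooth_deriv smooth_smooth_step)
qed (auto intro: bump_outside)

lemma smooth_step_has_deriv: "(smooth_step has_real_derivative bump x) (at x)"
  unfolding bump_def by (rule smooth_imp_has_deriv[OF smooth_smooth_step])

section \<open>Locally integrable functions and the fundamental lemma\<close>

definition loc_integrable :: "(real \<Rightarrow> real) \<Rightarrow> bool" where
  "loc_integrable f \<longleftrightarrow>
     f \<in> borel_measurable lborel \<and> (\<forall>a b. integrable lborel (\<lambda>x. f x * indicator {a..b} x))"

lemma integrable_indicator_Icc [simp]: "integrable lborel (\<lambda>x. indicator {a..b::real} x :: real)"
  by (rule integrable_real_indicator) (simp_all add: emeasure_lborel_Icc_eq)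

lemma abs_le_1_plus_square: "\<bar>y::real\<bar> \<le> 1 + y\<^sup>2"
proof (cases "\<bar>y\<bar> \<le> 1")
  case False
  then have "\<bar>y\<bar> * 1 \<le> \<bar>y\<bar> * \<bar>y\<bar>" by (intro mult_left_mono) auto
  then show ?thesis by (simp add: power2_eq_square abs_mult_self_eq)
qed (simp add: add_increasing2)

lemma sq_int_loc_integrable: "sq_int f \<Longrightarrow> loc_integrable f"
  unfolding loc_integrable_def sq_int_def
proof safe
  fix a b :: real
  assume m: "f \<in> borel_measurable lborel" and i: "integrable lborel (\<lambda>x. (f x)\<^sup>2)"
  have "integrable lborel (\<lambda>x. indicator {a..b} x + indicator {a..b} x *\<^sub>R (f x)\<^sup>2)"
    using i by (intro Bochner_Integration.integrable_add integrable_indicator_Icc integrable_mult_indicator) simp_all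
  then show "integrable lborel (\<lambda>x. f x * indicator {a..b} x)"
    by (rule Bochner_Integration.integrable_bound)
      (use m abs_le_1_plus_square[of "f _"] in \<open>auto split: split_indicator\<close>)
qed

lemma loc_integrable_measurable: "loc_integrable f \<Longrightarrow> f \<in> borel_measurable lborel"
  by (simp add: loc_integrable_def)

lemma loc_integrable_abs_indicator:
  assumes "loc_integrable g"
  shows "integrable lborel (\<lambda>y. \<bar>g y\<bar> * indicator {a..b} y)"
proof -
  have "integrable lborel (\<lambda>y. \<bar>g y * indicator {a..b} y\<bar>)"
    using assms unfolding loc_integrable_def by (intro integrable_abs) auto
  then show ?thesis by (simp add: abs_mult)
qed

lemma loc_integrable_const: "loc_integrable (\<lambda>x. c)"
  unfolding loc_integrable_def using integrable_mult_left[OF integrable_indicator_Icc, of c] by auto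

lemma loc_integrable_add:
  "loc_integrable f \<Longrightarrow> loc_integrable g \<Longrightarrow> loc_integrable (\<lambda>x. f x + g x)"
  unfolding loc_integrable_def by (auto simp: distrib_right intro!: Bochner_Integration.integrable_add)

lemma loc_integrable_cmult: "loc_integrable f \<Longrightarrow> loc_integrable (\<lambda>x. c * f x)"
  unfolding loc_integrable_def by (auto simp: mult.assoc intro!: integrable_mult_right)

lemma loc_integrable_diff:
  "loc_integrable f \<Longrightarrow> loc_integrable g \<Longrightarrow> loc_integrable (\<lambda>x. f x - g x)"
  using loc_integrable_add[of f "\<lambda>x. (-1) * g x"] loc_integrable_cmult[of g "-1"] by simp

lemma loc_integrable_continuous: "continuous_on UNIV f \<Longrightarrow> loc_integrable f"
  unfolding loc_integrable_def
  by (auto intro!: borel_integrable_atLeastAtMost borel_measurable_continuous_onI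
      simp: continuous_on_eq_continuous_at)

lemma continuous_compact_support_bounded:
  fixes \<phi> :: "real \<Rightarrow> real"
  assumes "continuous_on UNIV \<phi>" "\<And>x. R < \<bar>x\<bar> \<Longrightarrow> \<phi> x = 0"
  obtains B where "\<And>x. \<bar>\<phi> x\<bar> \<le> B"
proof -
  have "compact (\<phi> ` {-R..R})"
    by (rule compact_continuous_image) (auto intro: continuous_on_subset[OF assms(1)])
  then obtain B where B: "\<And>y. y \<in> \<phi> ` {-R..R} \<Longrightarrow> \<bar>y\<bar> \<le> B"
    by (metis bounded_real compact_imp_bounded)
  have "\<bar>\<phi> x\<bar> \<le> max B 0" for x
  proof (cases "R < \<bar>x\<bar>")
    case False
    then have "x \<in> {-R..R}" by (simp add: not_less abs_le_iff)
    then have "\<phi> x \<in> \<phi> ` {-R..R}" by (rule imageI)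
    then show ?thesis using B by force
  qed (simp add: assms(2))
  then show ?thesis by (rule that)
qed

lemma loc_integrable_mult_test_fun:
  assumes f: "loc_integrable f" and t: "test_fun \<phi>"
  shows "integrable lborel (\<lambda>x. f x * \<phi> x)"
proof -
  obtain R where R: "\<And>x. R < \<bar>x\<bar> \<Longrightarrow> \<phi> x = 0" using test_fun_support[OF t] by blast
  obtain B where B: "\<And>x. \<bar>\<phi> x\<bar> \<le> B"
    using continuous_compact_support_bounded[OF test_fun_continuous[OF t] R] by blast
  have "integrable lborel (\<lambda>x. B * (f x * indicator {-R..R} x))"
    using f unfolding loc_integrable_def by auto
  then show ?thesis
  proof (rule Bochner_Integration.integrable_bound)
    show "(\<lambda>x. f x * \<phi> x) \<in> borel_measurable lborel"
      using f borel_measurable_continuous_onI[OF test_fun_continuous[OF t]]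
      unfolding loc_integrable_def by (auto intro: borel_measurable_times)
    have "\<bar>f x * \<phi> x\<bar> \<le> \<bar>B * (f x * indicator {-R..R} x)\<bar>" for x
    proof (cases "R < \<bar>x\<bar>")
      case False
      have "\<bar>f x * \<phi> x\<bar> \<le> \<bar>f x\<bar> * B" by (simp add: abs_mult mult_left_mono B)
      moreover have "x \<in> {-R..R}" using False by (simp add: not_less abs_le_iff)
      ultimately show ?thesis
        using order_trans[OF abs_ge_zero B] by (simp add: abs_mult mult.commute)
    qed (simp add: R)
    then show "AE x in lborel. norm (f x * \<phi> x) \<le> norm (B * (f x * indicator {-R..R} x))"
      by simp
  qed
qed

lemma test_fun_integrable: "test_fun \<phi> \<Longrightarrow> integrable lborel \<phi>"
  using loc_integrable_mult_test_fun[OF loc_integrable_const[of 1]] by simp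

lemma smooth_box_integral_tendsto:
  assumes k: "loc_integrable k" and ab: "a \<le> b"
  shows "(\<lambda>n. LINT x|lborel. k x * smooth_box a b (1 / real (Suc n)) x)
    \<longlonglongrightarrow> (LINT x|lborel. k x * indicator {a<..b} x)"
proof (rule integral_dominated_convergence[where w="\<lambda>x. \<bar>k x * indicator {a..b+1} x\<bar>"])
  show "(\<lambda>x. k x * indicator {a<..b} x) \<in> borel_measurable lborel"
    using loc_integrable_measurable[OF k] by simp
  show "(\<lambda>x. k x * smooth_box a b (1 / real (Suc n)) x) \<in> borel_measurable lborel" for n
    using loc_integrable_mult_test_fun[OF k test_fun_smooth_box[OF _ ab]]
    by (auto intro: borel_measurable_integrable)
  show "integrable lborel (\<lambda>x. \<bar>k x * indicator {a..b + 1} x\<bar>)"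
    using k by (auto simp: loc_integrable_def)
  show "AE x in lborel. (\<lambda>n. k x * smooth_box a b (1 / real (Suc n)) x) \<longlonglongrightarrow> k x * indicator {a<..b} x"
    by (intro AE_I2 tendsto_mult tendsto_const smooth_box_tendsto_indicator ab)
  have "norm (k x * smooth_box a b (1 / real (Suc n)) x) \<le> \<bar>k x * indicator {a..b + 1} x\<bar>" for n x
  proof (cases "x \<in> {a..b + 1}")
    case True
    then show ?thesis using smooth_box_bound[of a b "1 / real (Suc n)" x]
      by (simp add: abs_mult mult_left_le)
  next
    case False
    have "b + 1 / real (Suc n) \<le> b + 1" by simp
    then have "x \<notin> {a..b + 1 / real (Suc n)}" using False by (meson atLeastAtMost_iff order_trans)
    then show ?thesis using smooth_box_outside[OF _ ab] False by simp
  qed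
  then show "AE x in lborel. norm (k x * smooth_box a b (1 / real (Suc n)) x) \<le> \<bar>k x * indicator {a..b + 1} x\<bar>"
    for n by simp
qed

lemma measure_density_lborel:
  fixes g :: "real \<Rightarrow> real"
  assumes g: "integrable lborel g" and nn: "\<And>x. 0 \<le> g x" and A: "A \<in> sets borel"
  shows "measure (density lborel (\<lambda>x. ennreal (g x))) A = (LINT x|lborel. g x * indicator A x)"
proof -
  have i: "integrable lborel (\<lambda>x. g x * indicator A x)"
    using integrable_mult_indicator[of A lborel g] A g by (simp add: mult.commute)
  have "emeasure (density lborel (\<lambda>x. ennreal (g x))) A = (\<integral>\<^sup>+ x. ennreal (g x) * indicator A x \<partial>lborel)"
    using borel_measurable_integrable[OF g] A by (intro emeasure_density) auto
  also have "\<dots> = (\<integral>\<^sup>+ x. ennreal (g x * indicator A x) \<partial>lborel)"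
    by (intro nn_integral_cong) (auto split: split_indicator)
  also have "\<dots> = ennreal (LINT x|lborel. g x * indicator A x)"
    using i nn by (intro nn_integral_eq_integral) auto
  finally show ?thesis
    unfolding measure_def using nn by (simp add: integral_nonneg_AE)
qed

lemma finite_borel_measure_density_lborel:
  fixes g :: "real \<Rightarrow> real"
  assumes g: "integrable lborel g" and nn: "\<And>x. 0 \<le> g x"
  shows "finite_borel_measure (density lborel (\<lambda>x. ennreal (g x)))"
proof -
  have "emeasure (density lborel (\<lambda>x. ennreal (g x))) UNIV = (\<integral>\<^sup>+ x. ennreal (g x) \<partial>lborel)"
    using borel_measurable_integrable[OF g] by (simp add: emeasure_density)
  also have "\<dots> = ennreal (LINT x|lborel. g x)"
    using g nn by (intro nn_integral_eq_integral) auto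
  finally have "emeasure (density lborel (\<lambda>x. ennreal (g x))) UNIV \<noteq> \<infinity>" by simp
  then show ?thesis
    unfolding finite_borel_measure_def finite_borel_measure_axioms_def
    by (auto intro!: finite_measureI)
qed

text \<open>The positive and negative parts of \<open>k\<close> are densities of finite measures with the
  same distribution function, hence equal.\<close>

lemma AE_zero_if_Ioc_integrals_zero:
  fixes k :: "real \<Rightarrow> real"
  assumes k: "integrable lborel k" and left: "\<And>x. x \<le> c \<Longrightarrow> k x = 0"
    and h: "\<And>a b. a \<le> b \<Longrightarrow> (LINT x|lborel. k x * indicator {a<..b} x) = 0"
  shows "AE x in lborel. k x = 0"
proof -
  define kp where "kp x = max 0 (k x)" for x
  define kn where "kn x = max 0 (- k x)" for x
  have ikp: "integrable lborel kp" and ikn: "integrable lborel kn"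
    unfolding kp_def kn_def using k by (auto intro!: integrable_max)
  have nn: "\<And>x. 0 \<le> kp x" "\<And>x. 0 \<le> kn x" by (auto simp: kp_def kn_def)
  have k_eq: "k x = kp x - kn x" for x by (simp add: kp_def kn_def)
  have cdf_eq: "cdf (density lborel (\<lambda>x. ennreal (kp x))) y = cdf (density lborel (\<lambda>x. ennreal (kn x))) y"
    for y
  proof -
    have "(LINT x|lborel. k x * indicator {..y} x) = (LINT x|lborel. k x * indicator {c<..y} x)"
      using left by (intro Bochner_Integration.integral_cong) (auto split: split_indicator)
    also have "\<dots> = 0"
      using h[of c y] by (cases "c \<le> y") auto
    finally have "(LINT x|lborel. kp x * indicator {..y} x - kn x * indicator {..y} x) = 0"
      by (simp add: k_eq left_diff_distrib)
    moreover have "integrable lborel (\<lambda>x. kp x * indicator {..y} x)"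
      "integrable lborel (\<lambda>x. kn x * indicator {..y} x)"
      using ikp ikn by (auto intro: integrable_real_mult_indicator)
    ultimately show ?thesis
      unfolding cdf_def2 by (simp add: measure_density_lborel ikp ikn nn)
  qed
  have "density lborel (\<lambda>x. ennreal (kp x)) = density lborel (\<lambda>x. ennreal (kn x))"
    using ikp ikn nn by (intro cdf_unique' finite_borel_measure_density_lborel ext cdf_eq)
  then have "AE x in lborel. ennreal (kp x) = ennreal (kn x)"
    using ikp ikn
    by (intro sigma_finite_measure.density_unique[OF sigma_finite_lborel])
      (auto dest: borel_measurable_integrable)
  then show ?thesis
    by (rule eventually_mono) (use nn in \<open>simp add: k_eq ennreal_inj\<close>)
qed

lemma loc_integrable_AE_zero_if_Ioc_integrals_zero:
  assumes k: "loc_integrable k"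
    and h: "\<And>a b. a \<le> b \<Longrightarrow> (LINT x|lborel. k x * indicator {a<..b} x) = 0"
  shows "AE x in lborel. k x = 0"
proof -
  have "AE x in lborel. k x * indicator {-real n<..real n} x = 0" for n
  proof (rule AE_zero_if_Ioc_integrals_zero[where c="-real n"])
    have "integrable lborel (\<lambda>x. k x * indicator {-real n..real n} x * indicator {-real n<..real n} x)"
      using k unfolding loc_integrable_def
      by (intro integrable_real_mult_indicator[where f="\<lambda>x. k x * indicator {-real n..real n} x"]) auto
    also have "(\<lambda>x. k x * indicator {-real n..real n} x * indicator {-real n<..real n} x)
        = (\<lambda>x. k x * indicator {-real n<..real n} x)"
      by (auto split: split_indicator)
    finally show "integrable lborel (\<lambda>x. k x * indicator {-real n<..real n} x)" .
    fix a b :: real assume "a \<le> b"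
    have "(LINT x|lborel. k x * indicator {-real n<..real n} x * indicator {a<..b} x)
        = (LINT x|lborel. k x * indicator {max a (-real n)<..min b (real n)} x)"
      by (intro Bochner_Integration.integral_cong) (auto split: split_indicator)
    also have "\<dots> = 0"
      using h[of "max a (-real n)" "min b (real n)"] by (cases "max a (-real n) \<le> min b (real n)") auto
    finally show "(LINT x|lborel. k x * indicator {-real n<..real n} x * indicator {a<..b} x) = 0" .
  qed (auto split: split_indicator)
  then have "AE x in lborel. \<forall>n. k x * indicator {-real n<..real n} x = 0"
    by (subst AE_all_countable) blast
  then show ?thesis
  proof (rule eventually_mono)
    fix x assume a: "\<forall>n. k x * indicator {-real n<..real n} x = 0"
    obtain n :: nat where "\<bar>x\<bar> < real n" using reals_Archimedean2 by blast
    then show "k x = 0" using a[rule_format, of n] by (auto simp: abs_less_iff)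
  qed
qed

lemma test_fun_orthogonal_imp_AE_zero:
  assumes k: "loc_integrable k" and h: "\<And>\<phi>. test_fun \<phi> \<Longrightarrow> (LINT x|lborel. k x * \<phi> x) = 0"
  shows "AE x in lborel. k x = 0"
proof (rule loc_integrable_AE_zero_if_Ioc_integrals_zero[OF k])
  fix a b :: real assume ab: "a \<le> b"
  have "(LINT x|lborel. k x * smooth_box a b (1 / real (Suc n)) x) = 0" for n
    by (rule h[OF test_fun_smooth_box[OF _ ab]]) simp
  then show "(LINT x|lborel. k x * indicator {a<..b} x) = 0"
    using smooth_box_integral_tendsto[OF k ab] by (simp add: LIMSEQ_const_iff)
qed

lemma continuous_AE_eq_imp_eq:
  fixes f g :: "real \<Rightarrow> real"
  assumes f: "continuous_on UNIV f" and g: "continuous_on UNIV g"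
    and ae: "AE x in lborel. f x = g x"
  shows "f = g"
proof (rule ccontr)
  assume "f \<noteq> g"
  then obtain x0 where x0: "f x0 \<noteq> g x0" by auto
  have "open {x. f x \<noteq> g x}"
    using f g by (intro open_Collect_neq) (auto simp: continuous_on_eq_continuous_at)
  then obtain r where r: "0 < r" "ball x0 r \<subseteq> {x. f x \<noteq> g x}"
    using x0 by (auto simp: open_contains_ball)
  from ae obtain N where N: "{x \<in> space lborel. f x \<noteq> g x} \<subseteq> N" "emeasure lborel N = 0" "N \<in> sets lborel"
    by (rule AE_E)
  have "{x0 - r<..<x0 + r} \<subseteq> N"
    using r N(1) by (auto simp: ball_def dist_real_def abs_less_iff subset_iff)
  then have "emeasure lborel {x0 - r<..<x0 + r} \<le> emeasure lborel N"
    using N(3) by (intro emeasure_mono) auto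
  then show False using N(2) r(1) by simp
qed

section \<open>Primitives and weak derivatives of first order\<close>

lemma has_real_derivative_interval_integral:
  fixes f :: "real \<Rightarrow> real" and c x :: real
  assumes "continuous_on UNIV f"
  shows "((\<lambda>u. LBINT y=c..u. f y) has_real_derivative f x) (at x)"
proof -
  have "((\<lambda>u. LBINT y=c..u. f y) has_vector_derivative f x) (at x within {min c x - 1..max c x + 1})"
    by (rule interval_integral_FTC2) (auto intro: continuous_on_subset[OF assms])
  moreover have "at x within {min c x - 1..max c x + 1} = at x" by (rule at_within_interior) auto
  ultimately show ?thesis by (simp add: has_real_derivative_iff_has_vector_derivative)
qed

lemma integral_Icc_eq_diff:
  fixes f F :: "real \<Rightarrow> real"
  assumes c: "continuous_on UNIV f" and d: "\<And>x. (F has_real_derivative f x) (at x)" and ab: "a \<le> b"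
  shows "(LINT x|lborel. indicator {a..b} x *\<^sub>R f x) = F b - F a"
proof -
  have "(LBINT x=a..b. f x) = F b - F a"
  proof (rule interval_integral_FTC_finite)
    show "continuous_on {min a b..max a b} f" by (rule continuous_on_subset[OF c]) auto
    show "(F has_vector_derivative f x) (at x within {min a b..max a b})" for x
      using d[of x] by (simp add: has_real_derivative_iff_has_vector_derivative[symmetric]
          has_field_derivative_at_within)
  qed
  then show ?thesis using ab by (simp add: interval_integral_Icc set_lebesgue_integral_def)
qed

lemma integral_eq_diff_if_support_Icc:
  fixes f F :: "real \<Rightarrow> real"
  assumes "continuous_on UNIV f" "\<And>x. (F has_real_derivative f x) (at x)" "a \<le> b"
    and "\<And>x. x \<notin> {a..b} \<Longrightarrow> f x = 0"
  shows "(LINT x|lborel. f x) = F b - F a"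
proof -
  have "(LINT x|lborel. f x) = (LINT x|lborel. indicator {a..b} x *\<^sub>R f x)"
    using assms(4) by (intro Bochner_Integration.integral_cong) (auto split: split_indicator)
  then show ?thesis using integral_Icc_eq_diff[OF assms(1-3)] by simp
qed

lemma integral_bump: "(LINT x|lborel. bump x) = 1"
  using integral_eq_diff_if_support_Icc[OF test_fun_continuous[OF test_fun_bump]
      smooth_step_has_deriv, of 0 1] bump_outside
  by (simp add: smooth_step_nonpos smooth_step_ge_1)

lemma test_fun_antiderivative:
  assumes t: "test_fun \<psi>" and z: "(LINT x|lborel. \<psi> x) = 0"
  obtains \<Phi> where "test_fun \<Phi>" "deriv \<Phi> = \<psi>"
proof -
  obtain R where R: "\<And>x. R < \<bar>x\<bar> \<Longrightarrow> \<psi> x = 0" using test_fun_support[OF t] by blast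
  define R' :: real where "R' = \<bar>R\<bar> + 1"
  define \<Phi> where "\<Phi> u = (LBINT y=-R'..u. \<psi> y)" for u :: real
  have d: "(\<Phi> has_real_derivative \<psi> x) (at x)" for x
    unfolding \<Phi>_def[abs_def] by (rule has_real_derivative_interval_integral[OF test_fun_continuous[OF t]])
  have \<Phi>_left: "\<Phi> (-R') = 0" by (simp add: \<Phi>_def)
  have "\<Phi> x = 0" if x: "R' < \<bar>x\<bar>" for x
  proof (cases "x < 0")
    case True
    have "(\<lambda>y. indicator {x..-R'} y *\<^sub>R \<psi> y) = (\<lambda>y. 0)"
    proof
      fix y show "indicator {x..-R'} y *\<^sub>R \<psi> y = 0"
        using R[of y] by (cases "y \<in> {x..-R'}") (auto simp: R'_def)
    qed
    moreover have "(LINT y|lborel. indicator {x..-R'} y *\<^sub>R \<psi> y) = \<Phi> (-R') - \<Phi> x"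
      using x True by (intro integral_Icc_eq_diff[OF test_fun_continuous[OF t] d]) auto
    ultimately show ?thesis using \<Phi>_left by simp
  next
    case False
    have "(LINT y|lborel. \<psi> y) = \<Phi> x - \<Phi> (-R')"
    proof (rule integral_eq_diff_if_support_Icc[OF test_fun_continuous[OF t] d])
      fix y assume "y \<notin> {-R'..x}"
      then show "\<psi> y = 0" using R[of y] x False by (auto simp: R'_def)
    qed (use x False in \<open>auto simp: R'_def\<close>)
    then show ?thesis using z \<Phi>_left by simp
  qed
  then have "test_fun \<Phi>"
    using smooth_if_smooth_derivative[OF test_fun_smooth[OF t] d] by (intro test_funI)
  moreover have "deriv \<Phi> = \<psi>" using d by (rule deriv_eqI)
  ultimately show ?thesis by (rule that)
qed

lemma du_Bois_Reymond:
  assumes h: "loc_integrable h" and z: "\<And>\<phi>. test_fun \<phi> \<Longrightarrow> (LINT x|lborel. h x * deriv \<phi> x) = 0"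
  obtains c where "AE x in lborel. h x = c"
proof -
  define c where "c = (LINT x|lborel. h x * bump x)"
  have "(LINT x|lborel. (h x - c) * \<phi> x) = 0" if t: "test_fun \<phi>" for \<phi>
  proof -
    define I where "I = (LINT x|lborel. \<phi> x)"
    have ip: "integrable lborel \<phi>" "integrable lborel bump"
      by (simp_all add: test_fun_integrable t test_fun_bump)
    have hp: "integrable lborel (\<lambda>x. h x * \<phi> x)" "integrable lborel (\<lambda>x. h x * bump x)"
      by (simp_all add: loc_integrable_mult_test_fun h t test_fun_bump)
    have "test_fun (\<lambda>x. 1 * \<phi> x + (- I) * bump x)" by (rule test_fun_lin[OF t test_fun_bump])
    moreover have "(LINT x|lborel. 1 * \<phi> x + (- I) * bump x) = 0"
      using ip by (simp add: I_def integral_bump)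
    ultimately obtain \<Phi> where \<Phi>: "test_fun \<Phi>" "deriv \<Phi> = (\<lambda>x. 1 * \<phi> x + (- I) * bump x)"
      by (rule test_fun_antiderivative)
    have "0 = (LINT x|lborel. h x * (1 * \<phi> x + (- I) * bump x))" using z[OF \<Phi>(1)] \<Phi>(2) by simp
    also have "\<dots> = (LINT x|lborel. h x * \<phi> x) - I * c"
      using hp by (simp add: c_def algebra_simps)
    also have "\<dots> = (LINT x|lborel. (h x - c) * \<phi> x)"
      using hp ip by (simp add: I_def algebra_simps)
    finally show ?thesis by simp
  qed
  then have "AE x in lborel. h x - c = 0"
    by (intro test_fun_orthogonal_imp_AE_zero loc_integrable_diff h loc_integrable_const)
  then show ?thesis by (intro that[of c]) auto
qed

text \<open>Writing the primitive as an integral against \<open>primitive_kernel x\<close> reduces its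
  continuity to dominated convergence and integration by parts to Fubini.\<close>

definition primitive :: "(real \<Rightarrow> real) \<Rightarrow> real \<Rightarrow> real" where
  "primitive g x = (LBINT y=ereal 0..ereal x. g y)"

definition primitive_kernel :: "real \<Rightarrow> real \<Rightarrow> real" where
  "primitive_kernel x y = (if 0 \<le> y \<and> y \<le> x then 1 else if x \<le> y \<and> y \<le> 0 then -1 else 0)"

lemma primitive_kernel_bound: "\<bar>primitive_kernel x y\<bar> \<le> 1"
  by (simp add: primitive_kernel_def)

lemma primitive_kernel_nonzero: "primitive_kernel x y \<noteq> 0 \<Longrightarrow> \<bar>y\<bar> \<le> \<bar>x\<bar>"
  by (auto simp: primitive_kernel_def split: if_splits)

lemma primitive_kernel_measurable [measurable]:
  "(\<lambda>y. primitive_kernel x y) \<in> borel_measurable borel"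
  "(\<lambda>p. primitive_kernel (fst p) (snd p)) \<in> borel_measurable (lborel \<Otimes>\<^sub>M lborel)"
  unfolding primitive_kernel_def by measurable

lemma integrable_mult_primitive_kernel:
  assumes g: "loc_integrable g"
  shows "integrable lborel (\<lambda>z. g z * primitive_kernel x z)"
  using loc_integrable_abs_indicator[OF g, of "-\<bar>x\<bar>" "\<bar>x\<bar>"]
proof (rule Bochner_Integration.integrable_bound)
  show "(\<lambda>z. g z * primitive_kernel x z) \<in> borel_measurable lborel"
    using loc_integrable_measurable[OF g] by measurable
  have "\<bar>g z * primitive_kernel x z\<bar> \<le> \<bar>g z\<bar> * indicator {- \<bar>x\<bar>..\<bar>x\<bar>} z" for z
    using primitive_kernel_nonzero[of x z] primitive_kernel_bound[of x z]
    by (cases "primitive_kernel x z = 0") (auto simp: abs_mult mult_left_le abs_le_iff)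
  then show "AE z in lborel. norm (g z * primitive_kernel x z) \<le> norm (\<bar>g z\<bar> * indicator {- \<bar>x\<bar>..\<bar>x\<bar>} z)"
    by simp
qed

lemma primitive_eq_kernel_integral:
  assumes "loc_integrable g"
  shows "primitive g x = (LINT y|lborel. g y * primitive_kernel x y)"
proof (cases "0 \<le> x")
  case True
  have "primitive g x = (LINT y|lborel. indicator {0..x} y *\<^sub>R g y)"
    using True by (simp add: primitive_def interval_integral_Icc set_lebesgue_integral_def)
  also have "\<dots> = (LINT y|lborel. g y * primitive_kernel x y)"
    by (intro Bochner_Integration.integral_cong)
      (use True in \<open>auto simp: primitive_kernel_def split: split_indicator\<close>)
  finally show ?thesis .
next
  case False
  have "primitive g x = - (LBINT y=ereal x..ereal 0. g y)"
    unfolding primitive_def by (rule interval_integral_endpoints_reverse)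
  also have "\<dots> = (LINT y|lborel. - (indicator {x..0} y *\<^sub>R g y))"
    using False by (simp add: interval_integral_Icc set_lebesgue_integral_def)
  also have "\<dots> = (LINT y|lborel. g y * primitive_kernel x y)"
    by (intro Bochner_Integration.integral_cong)
      (use False in \<open>auto simp: primitive_kernel_def split: split_indicator\<close>)
  finally show ?thesis .
qed

lemma primitive_cong_AE:
  assumes "loc_integrable g" "loc_integrable h" "AE x in lborel. g x = h x"
  shows "primitive g = primitive h"
proof
  fix x
  have "(LINT y|lborel. g y * primitive_kernel x y) = (LINT y|lborel. h y * primitive_kernel x y)"
    using assms by (intro integral_cong_AE) (auto dest: loc_integrable_measurable elim: eventually_mono)
  then show "primitive g x = primitive h x" by (simp add: primitive_eq_kernel_integral assms)
qed

lemma eventually_primitive_kernel_const: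
  assumes "y \<noteq> 0" "y \<noteq> x" "u \<longlonglongrightarrow> x"
  shows "\<forall>\<^sub>F n in sequentially. primitive_kernel (u n) y = primitive_kernel x y"
proof (cases "y < x")
  case True
  from order_tendstoD(1)[OF assms(3) True] show ?thesis
    by (rule eventually_mono) (use True assms(1) in \<open>auto simp: primitive_kernel_def\<close>)
next
  case False
  then have "x < y" using assms(2) by auto
  from order_tendstoD(2)[OF assms(3) this] show ?thesis
    by (rule eventually_mono) (use \<open>x < y\<close> assms(1) in \<open>auto simp: primitive_kernel_def\<close>)
qed

lemma continuous_primitive:
  assumes g: "loc_integrable g"
  shows "continuous_on UNIV (primitive g)"
proof (intro continuous_at_imp_continuous_on ballI continuous_at_sequentiallyI)
  fix x and u :: "nat \<Rightarrow> real" assume u: "u \<longlonglongrightarrow> x"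
  obtain M where M: "\<And>n. \<bar>u n\<bar> \<le> M"
    using convergent_imp_Bseq[OF convergentI[OF u]] by (auto simp: Bseq_def)
  define M' where "M' = max M \<bar>x\<bar>"
  have gm [measurable]: "g \<in> borel_measurable lborel" by (rule loc_integrable_measurable[OF g])
  have "(\<lambda>n. LINT y|lborel. g y * primitive_kernel (u n) y) \<longlonglongrightarrow> (LINT y|lborel. g y * primitive_kernel x y)"
  proof (rule integral_dominated_convergence[where w="\<lambda>y. \<bar>g y\<bar> * indicator {-M'..M'} y"])
    show "integrable lborel (\<lambda>y. \<bar>g y\<bar> * indicator {- M'..M'} y)"
      by (rule loc_integrable_abs_indicator[OF g])
    show "AE y in lborel. (\<lambda>n. g y * primitive_kernel (u n) y) \<longlonglongrightarrow> g y * primitive_kernel x y"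
      using AE_lborel_singleton[of 0] AE_lborel_singleton[of x]
    proof eventually_elim
      case (elim y)
      show ?case
        using eventually_primitive_kernel_const[OF elim u] by (auto intro: tendsto_eventually elim: eventually_mono)
    qed
    have "\<bar>g y * primitive_kernel (u n) y\<bar> \<le> \<bar>g y\<bar> * indicator {- M'..M'} y" for n y
    proof (cases "primitive_kernel (u n) y = 0")
      case False
      then have "y \<in> {-M'..M'}"
        using primitive_kernel_nonzero[OF False] M[of n] by (auto simp: M'_def abs_le_iff)
      then show ?thesis
        using primitive_kernel_bound[of "u n" y] by (simp add: abs_mult mult_left_le)
    qed simp
    then show "AE y in lborel. norm (g y * primitive_kernel (u n) y) \<le> \<bar>g y\<bar> * indicator {- M'..M'} y"
      for n by simp
  qed measurable
  then show "(\<lambda>n. primitive g (u n)) \<longlonglongrightarrow> primitive g x"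
    by (simp add: primitive_eq_kernel_integral[OF g])
qed

lemma has_real_derivative_primitive:
  "continuous_on UNIV f \<Longrightarrow> (primitive f has_real_derivative f x) (at x)"
  unfolding primitive_def[abs_def] using has_real_derivative_interval_integral[of f 0 x]
  by (simp add: zero_ereal_def)

lemma primitive_diff_bound:
  assumes g: "loc_integrable g" and xy: "x \<le> y"
  shows "\<bar>primitive g y - primitive g x\<bar> \<le> (LINT z|lborel. \<bar>g z\<bar> * indicator {x..y} z)"
proof -
  have "\<bar>primitive g y - primitive g x\<bar>
      = \<bar>LINT z|lborel. g z * primitive_kernel y z - g z * primitive_kernel x z\<bar>"
    by (simp add: primitive_eq_kernel_integral[OF g] integrable_mult_primitive_kernel[OF g])
  also have "\<dots> \<le> (LINT z|lborel. \<bar>g z * primitive_kernel y z - g z * primitive_kernel x z\<bar>)"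
    by (rule integral_abs_bound)
  also have "\<dots> \<le> (LINT z|lborel. \<bar>g z\<bar> * indicator {x..y} z)"
  proof (rule integral_mono_AE)
    show "integrable lborel (\<lambda>z. \<bar>g z * primitive_kernel y z - g z * primitive_kernel x z\<bar>)"
      by (intro integrable_abs Bochner_Integration.integrable_diff integrable_mult_primitive_kernel[OF g])
    show "integrable lborel (\<lambda>z. \<bar>g z\<bar> * indicator {x..y} z)"
      by (rule loc_integrable_abs_indicator[OF g])
    show "AE z in lborel. \<bar>g z * primitive_kernel y z - g z * primitive_kernel x z\<bar> \<le> \<bar>g z\<bar> * indicator {x..y} z"
      using AE_lborel_singleton[of 0]
    proof (rule eventually_mono)
      fix z :: real assume "z \<noteq> 0"
      then have "\<bar>primitive_kernel y z - primitive_kernel x z\<bar> \<le> indicator {x..y} z"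
        using xy by (auto simp: primitive_kernel_def split: split_indicator)
      then show "\<bar>g z * primitive_kernel y z - g z * primitive_kernel x z\<bar> \<le> \<bar>g z\<bar> * indicator {x..y} z"
        by (simp add: abs_mult right_diff_distrib[symmetric] mult_left_mono)
    qed
  qed
  finally show ?thesis .
qed

definition weak_deriv1 :: "(real \<Rightarrow> real) \<Rightarrow> (real \<Rightarrow> real) \<Rightarrow> bool" where
  "weak_deriv1 f g \<longleftrightarrow>
     (\<forall>\<phi>. test_fun \<phi> \<longrightarrow> (LINT x|lborel. f x * deriv \<phi> x) = - (LINT x|lborel. g x * \<phi> x))"

lemma weak_deriv_Suc_imp_weak_deriv1:
  assumes a: "weak_deriv j f a" and b: "weak_deriv (Suc j) f b"
  shows "weak_deriv1 a b"
  unfolding weak_deriv1_def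
proof safe
  fix \<phi> assume t: "test_fun \<phi>"
  have "(-1)^j * (LINT x|lborel. a x * deriv \<phi> x) = (LINT x|lborel. f x * (deriv ^^ j) (deriv \<phi>) x)"
    using a test_fun_deriv[OF t] unfolding weak_deriv_def by simp
  also have "\<dots> = (LINT x|lborel. f x * (deriv ^^ Suc j) \<phi> x)"
    by (simp add: funpow_Suc_right del: funpow.simps)
  also have "\<dots> = (-1)^j * (- (LINT x|lborel. b x * \<phi> x))"
    using b t unfolding weak_deriv_def by simp
  finally have "(-1)^j * (LINT x|lborel. a x * deriv \<phi> x) = (-1)^j * (- (LINT x|lborel. b x * \<phi> x))" .
  moreover have "(-1::real)^j \<noteq> 0" by simp
  ultimately show "(LINT x|lborel. a x * deriv \<phi> x) = - (LINT x|lborel. b x * \<phi> x)"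
    using mult_left_cancel by blast
qed

lemma integral_primitive_kernel_deriv:
  assumes t: "test_fun \<phi>" and y: "y \<noteq> 0"
  shows "(LINT x|lborel. primitive_kernel x y * deriv \<phi> x) = - \<phi> y"
proof -
  obtain R where R: "\<And>x. R < \<bar>x\<bar> \<Longrightarrow> \<phi> x = 0" using test_fun_support[OF t] by blast
  obtain R2 where R2: "\<And>x. R2 < \<bar>x\<bar> \<Longrightarrow> deriv \<phi> x = 0"
    using test_fun_support[OF test_fun_deriv[OF t]] by blast
  define b where "b = \<bar>y\<bar> + \<bar>R\<bar> + \<bar>R2\<bar> + 1"
  have \<phi>_b: "\<phi> b = 0" "\<phi> (-b) = 0" using R[of b] R[of "-b"] by (auto simp: b_def)
  have d\<phi>_b: "deriv \<phi> x = 0" if "b < \<bar>x\<bar>" for x using R2[of x] that by (auto simp: b_def)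
  have cd: "continuous_on UNIV (deriv \<phi>)" by (rule test_fun_continuous[OF test_fun_deriv[OF t]])
  note FTC = integral_Icc_eq_diff[OF cd test_fun_has_deriv[OF t]]
  show ?thesis
  proof (cases "0 < y")
    case True
    have "(LINT x|lborel. primitive_kernel x y * deriv \<phi> x) = (LINT x|lborel. indicator {y..b} x *\<^sub>R deriv \<phi> x)"
      using True d\<phi>_b by (intro Bochner_Integration.integral_cong)
        (auto simp: primitive_kernel_def split: split_indicator)
    also have "\<dots> = - \<phi> y" using FTC[of y b] \<phi>_b by (simp add: b_def)
    finally show ?thesis .
  next
    case False
    then have "y < 0" using y by auto
    have "(LINT x|lborel. primitive_kernel x y * deriv \<phi> x) = (LINT x|lborel. - (indicator {-b..y} x *\<^sub>R deriv \<phi> x))"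
      using \<open>y < 0\<close> d\<phi>_b by (intro Bochner_Integration.integral_cong)
        (auto simp: primitive_kernel_def split: split_indicator)
    also have "\<dots> = - \<phi> y" using FTC[of "-b" y] \<phi>_b by (simp add: b_def)
    finally show ?thesis .
  qed
qed

lemma integrable_lborel_pair_mult:
  fixes a b :: "real \<Rightarrow> real"
  assumes a: "integrable lborel a" and b: "integrable lborel b"
  shows "integrable (lborel \<Otimes>\<^sub>M lborel) (\<lambda>p. a (fst p) * b (snd p))"
  unfolding integrable_iff_bounded
proof
  have [measurable]: "a \<in> borel_measurable lborel" "b \<in> borel_measurable lborel"
    using a b by (simp_all add: borel_measurable_integrable)
  show "(\<lambda>p. a (fst p) * b (snd p)) \<in> borel_measurable (lborel \<Otimes>\<^sub>M lborel)" by measurable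
  have "(\<integral>\<^sup>+p. ennreal (norm (a (fst p) * b (snd p))) \<partial>(lborel \<Otimes>\<^sub>M lborel))
      = (\<integral>\<^sup>+x. \<integral>\<^sup>+y. ennreal (norm (a (fst (x,y)) * b (snd (x,y)))) \<partial>lborel \<partial>lborel)"
    by (rule sigma_finite_measure.nn_integral_fst[OF sigma_finite_lborel, symmetric]) measurable
  also have "\<dots> = (\<integral>\<^sup>+x. ennreal \<bar>a x\<bar> * (\<integral>\<^sup>+y. ennreal \<bar>b y\<bar> \<partial>lborel) \<partial>lborel)"
    by (intro nn_integral_cong) (simp add: abs_mult ennreal_mult nn_integral_cmult)
  also have "\<dots> = (\<integral>\<^sup>+x. ennreal \<bar>a x\<bar> \<partial>lborel) * (\<integral>\<^sup>+y. ennreal \<bar>b y\<bar> \<partial>lborel)"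
    by (rule nn_integral_multc) measurable
  also have "\<dots> < \<infinity>"
    using a b unfolding integrable_iff_bounded by (simp add: ennreal_mult_less_top)
  finally show "(\<integral>\<^sup>+p. ennreal (norm (a (fst p) * b (snd p))) \<partial>(lborel \<Otimes>\<^sub>M lborel)) < \<infinity>" .
qed

lemma integrable_primitive_kernel_test_fun:
  assumes g: "loc_integrable g" and t: "test_fun \<phi>"
  shows "integrable (lborel \<Otimes>\<^sub>M lborel) (\<lambda>(x, y). g y * primitive_kernel x y * \<phi> x)"
proof -
  obtain R where R: "\<And>x. R < \<bar>x\<bar> \<Longrightarrow> \<phi> x = 0" using test_fun_support[OF t] by blast
  obtain B where B: "\<And>x. \<bar>\<phi> x\<bar> \<le> B"
    using continuous_compact_support_bounded[OF test_fun_continuous[OF t] R] by blast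
  have [measurable]: "g \<in> borel_measurable lborel" "\<phi> \<in> borel_measurable borel"
    using loc_integrable_measurable[OF g] borel_measurable_continuous_onI[OF test_fun_continuous[OF t]]
    by simp_all
  have bound: "\<bar>g y * primitive_kernel x y * \<phi> x\<bar>
      \<le> \<bar>B * indicator {-\<bar>R\<bar>..\<bar>R\<bar>} x * (\<bar>g y\<bar> * indicator {-\<bar>R\<bar>..\<bar>R\<bar>} y)\<bar>" for x y
  proof (cases "R < \<bar>x\<bar> \<or> primitive_kernel x y = 0")
    case False
    then have "x \<in> {-\<bar>R\<bar>..\<bar>R\<bar>}" "y \<in> {-\<bar>R\<bar>..\<bar>R\<bar>}" using primitive_kernel_nonzero[of x y] by auto
    moreover have "\<bar>g y\<bar> * \<bar>primitive_kernel x y\<bar> * \<bar>\<phi> x\<bar> \<le> \<bar>g y\<bar> * 1 * B"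
      by (intro mult_mono primitive_kernel_bound B) auto
    ultimately show ?thesis using B[of 0] by (simp add: abs_mult ac_simps)
  qed (auto simp: R)
  show ?thesis
    using integrable_lborel_pair_mult[OF integrable_mult_right[OF integrable_indicator_Icc]
        loc_integrable_abs_indicator[OF g]]
    by (rule Bochner_Integration.integrable_bound) (use bound in \<open>auto simp: split_beta'\<close>)
qed

lemma weak_deriv1_primitive:
  assumes g: "loc_integrable g"
  shows "weak_deriv1 (primitive g) g"
  unfolding weak_deriv1_def
proof safe
  fix \<phi> assume t: "test_fun \<phi>"
  have "(LINT x|lborel. primitive g x * deriv \<phi> x)
      = (LINT x|lborel. LINT y|lborel. g y * primitive_kernel x y * deriv \<phi> x)"
    by (simp add: primitive_eq_kernel_integral[OF g])
  also have "\<dots> = (LINT y|lborel. LINT x|lborel. g y * primitive_kernel x y * deriv \<phi> x)"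
    using integrable_primitive_kernel_test_fun[OF g test_fun_deriv[OF t]]
    by (intro lborel_pair.Fubini_integral[symmetric]) (simp add: split_beta')
  also have "\<dots> = (LINT y|lborel. g y * (LINT x|lborel. primitive_kernel x y * deriv \<phi> x))"
    by (simp add: mult.assoc)
  also have "\<dots> = (LINT y|lborel. - (g y * \<phi> y))"
    by (rule integral_discrete_difference[where X="{0}"])
      (auto simp: integral_primitive_kernel_deriv[OF t])
  finally show "(LINT x|lborel. primitive g x * deriv \<phi> x) = - (LINT x|lborel. g x * \<phi> x)"
    by simp
qed

lemma weak_deriv1_imp_AE_eq_primitive:
  assumes f: "loc_integrable f" and g: "loc_integrable g" and w: "weak_deriv1 f g"
  obtains c where "AE x in lborel. f x = c + primitive g x"
proof -
  have G: "loc_integrable (primitive g)" by (rule loc_integrable_continuous[OF continuous_primitive[OF g]])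
  have "(LINT x|lborel. (f x - primitive g x) * deriv \<phi> x) = 0" if t: "test_fun \<phi>" for \<phi>
  proof -
    note i = loc_integrable_mult_test_fun[OF _ test_fun_deriv[OF t]]
    have "(LINT x|lborel. (f x - primitive g x) * deriv \<phi> x)
        = (LINT x|lborel. f x * deriv \<phi> x) - (LINT x|lborel. primitive g x * deriv \<phi> x)"
      using i[OF f] i[OF G] by (simp add: left_diff_distrib)
    then show ?thesis using w t weak_deriv1_primitive[OF g] by (simp add: weak_deriv1_def)
  qed
  then obtain c where "AE x in lborel. f x - primitive g x = c"
    by (rule du_Bois_Reymond[OF loc_integrable_diff[OF f G]])
  then show ?thesis by (intro that[of c]) (auto elim: eventually_mono)
qed

section \<open>Sobolev functions: continuous representatives and uniform bounds\<close>

definition wderiv :: "nat \<Rightarrow> (real \<Rightarrow> real) \<Rightarrow> real \<Rightarrow> real" where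
  "wderiv j f = (SOME g. sq_int g \<and> weak_deriv j f g)"

lemma Hk_wderiv: "Hk k f \<Longrightarrow> j \<le> k \<Longrightarrow> sq_int (wderiv j f) \<and> weak_deriv j f (wderiv j f)"
  unfolding Hk_def wderiv_def by (metis (mono_tags, lifting) someI_ex)

lemma Hk_norm_wderiv: "Hk_norm k f = sqrt (\<Sum>j\<le>k. LINT x|lborel. (wderiv j f x)\<^sup>2)"
  by (simp add: Hk_norm_def wderiv_def)

lemma integral_square_wderiv_le_Hk_norm:
  assumes "j \<le> k"
  shows "(LINT x|lborel. (wderiv j f x)\<^sup>2) \<le> (Hk_norm k f)\<^sup>2"
proof -
  have nn: "\<And>i. 0 \<le> (LINT x|lborel. (wderiv i f x)\<^sup>2)" by (intro integral_nonneg_AE) auto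
  have "(LINT x|lborel. (wderiv j f x)\<^sup>2) \<le> (\<Sum>i\<le>k. LINT x|lborel. (wderiv i f x)\<^sup>2)"
    using assms by (intro member_le_sum nn) auto
  also have "\<dots> = (Hk_norm k f)\<^sup>2"
    unfolding Hk_norm_wderiv by (rule real_sqrt_pow2[symmetric]) (intro sum_nonneg nn)
  finally show ?thesis .
qed

lemma Hk_norm_nonneg: "0 \<le> Hk_norm k f"
  unfolding Hk_norm_wderiv by (intro real_sqrt_ge_zero sum_nonneg integral_nonneg_AE) auto

lemma sq_int_measurable: "sq_int f \<Longrightarrow> f \<in> borel_measurable lborel"
  by (simp add: sq_int_def)

lemma continuous_imp_measurable_lborel: "continuous_on UNIV f \<Longrightarrow> f \<in> borel_measurable lborel"
  by (simp add: borel_measurable_continuous_onI)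

lemma Hk_mono: "Hk k f \<Longrightarrow> j \<le> k \<Longrightarrow> Hk j f"
  unfolding Hk_def by auto

lemma weak_deriv_0_imp_AE_eq:
  assumes f: "sq_int f" and g: "sq_int g" and w: "weak_deriv 0 f g"
  shows "AE x in lborel. f x = g x"
proof -
  have "AE x in lborel. f x - g x = 0"
  proof (rule test_fun_orthogonal_imp_AE_zero)
    show "loc_integrable (\<lambda>x. f x - g x)"
      by (intro loc_integrable_diff sq_int_loc_integrable f g)
    fix \<phi> assume "test_fun \<phi>"
    then show "(LINT x|lborel. (f x - g x) * \<phi> x) = 0"
      using w unfolding weak_deriv_def by (simp add: left_diff_distrib)
  qed
  then show ?thesis by (rule eventually_mono) simp
qed

lemma sq_int_cong_AE:
  assumes g: "sq_int g" and h: "h \<in> borel_measurable lborel" and ae: "AE x in lborel. g x = h x"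
  shows "sq_int h" "(LINT x|lborel. (h x)\<^sup>2) = (LINT x|lborel. (g x)\<^sup>2)"
proof -
  have ae2: "AE x in lborel. (g x)\<^sup>2 = (h x)\<^sup>2" using ae by (rule eventually_mono) simp
  have "integrable lborel (\<lambda>x. (g x)\<^sup>2) = integrable lborel (\<lambda>x. (h x)\<^sup>2)"
    by (rule integrable_cong_AE) (use sq_int_measurable[OF g] h ae2 in auto)
  then show "sq_int h" using g h by (simp add: sq_int_def)
  show "(LINT x|lborel. (h x)\<^sup>2) = (LINT x|lborel. (g x)\<^sup>2)"
    by (rule integral_cong_AE) (use sq_int_measurable[OF g] h ae2 in \<open>auto elim: eventually_mono\<close>)
qed

lemma weak_deriv_cong_AE:
  assumes f: "f \<in> borel_measurable lborel" and f': "f' \<in> borel_measurable lborel"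
    and ae: "AE x in lborel. f x = f' x"
  shows "weak_deriv j f g = weak_deriv j f' g"
proof -
  have "integrable lborel (\<lambda>x. f x * (deriv ^^ j) \<phi> x) = integrable lborel (\<lambda>x. f' x * (deriv ^^ j) \<phi> x)
      \<and> (LINT x|lborel. f x * (deriv ^^ j) \<phi> x) = (LINT x|lborel. f' x * (deriv ^^ j) \<phi> x)"
    if t: "test_fun \<phi>" for \<phi>
  proof -
    have "(deriv ^^ j) \<phi> \<in> borel_measurable borel"
      by (rule borel_measurable_continuous_onI[OF test_fun_derivs_continuous[OF t]])
    then have m: "(\<lambda>x. f x * (deriv ^^ j) \<phi> x) \<in> borel_measurable lborel"
      "(\<lambda>x. f' x * (deriv ^^ j) \<phi> x) \<in> borel_measurable lborel"
      using f f' by (auto intro: borel_measurable_times)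
    have "AE x in lborel. f x * (deriv ^^ j) \<phi> x = f' x * (deriv ^^ j) \<phi> x"
      using ae by (rule eventually_mono) simp
    then show ?thesis using integrable_cong_AE[OF m] integral_cong_AE[OF m] by simp
  qed
  then show ?thesis unfolding weak_deriv_def by auto
qed

lemma Hk_cong_AE:
  assumes h: "Hk k f" and f': "f' \<in> borel_measurable lborel" and ae: "AE x in lborel. f x = f' x"
  shows "Hk k f'"
  using h sq_int_cong_AE(1)[OF _ f' ae]
    weak_deriv_cong_AE[OF sq_int_measurable f' ae] unfolding Hk_def by auto

lemma Hk_norm_cong_AE:
  assumes "f \<in> borel_measurable lborel" "f' \<in> borel_measurable lborel" "AE x in lborel. f x = f' x"
  shows "Hk_norm k f = Hk_norm k f'"
  unfolding Hk_norm_def weak_deriv_cong_AE[OF assms] ..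

lemma sq_int_lin:
  assumes f: "sq_int f" and g: "sq_int g"
  shows "sq_int (\<lambda>x. a * f x + b * g x)"
proof -
  have fm [measurable]: "f \<in> borel_measurable lborel" by (rule sq_int_measurable[OF f])
  have gm [measurable]: "g \<in> borel_measurable lborel" by (rule sq_int_measurable[OF g])
  have "integrable lborel (\<lambda>x. 2 * a\<^sup>2 * (f x)\<^sup>2 + 2 * b\<^sup>2 * (g x)\<^sup>2)"
    using f g unfolding sq_int_def by (intro Bochner_Integration.integrable_add integrable_mult_right) auto
  then have "integrable lborel (\<lambda>x. (a * f x + b * g x)\<^sup>2)"
  proof (rule Bochner_Integration.integrable_bound)
    have "(a * f x + b * g x)\<^sup>2 \<le> 2 * a\<^sup>2 * (f x)\<^sup>2 + 2 * b\<^sup>2 * (g x)\<^sup>2" for x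
      using zero_le_power2[of "a * f x - b * g x"] by (simp add: power2_eq_square algebra_simps)
    then show "AE x in lborel. norm ((a * f x + b * g x)\<^sup>2) \<le> norm (2 * a\<^sup>2 * (f x)\<^sup>2 + 2 * b\<^sup>2 * (g x)\<^sup>2)"
      by simp
  qed measurable
  moreover have "(\<lambda>x. a * f x + b * g x) \<in> borel_measurable lborel" by measurable
  ultimately show ?thesis unfolding sq_int_def by simp
qed

lemma weak_deriv_lin:
  assumes p: "weak_deriv j f p" and q: "weak_deriv j g q"
  shows "weak_deriv j (\<lambda>x. a * f x + b * g x) (\<lambda>x. a * p x + b * q x)"
  unfolding weak_deriv_def
proof (intro allI impI)
  fix \<phi> assume "test_fun \<phi>"
  then have "integrable lborel (\<lambda>x. f x * (deriv ^^ j) \<phi> x)" "integrable lborel (\<lambda>x. p x * \<phi> x)"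
    "integrable lborel (\<lambda>x. g x * (deriv ^^ j) \<phi> x)" "integrable lborel (\<lambda>x. q x * \<phi> x)"
    "(LINT x|lborel. f x * (deriv ^^ j) \<phi> x) = (-1)^j * (LINT x|lborel. p x * \<phi> x)"
    "(LINT x|lborel. g x * (deriv ^^ j) \<phi> x) = (-1)^j * (LINT x|lborel. q x * \<phi> x)"
    using p q unfolding weak_deriv_def by auto
  then show "integrable lborel (\<lambda>x. (a * f x + b * g x) * (deriv ^^ j) \<phi> x) \<and>
    integrable lborel (\<lambda>x. (a * p x + b * q x) * \<phi> x) \<and>
    (LINT x|lborel. (a * f x + b * g x) * (deriv ^^ j) \<phi> x) = (-1)^j * (LINT x|lborel. (a * p x + b * q x) * \<phi> x)"
    by (simp add: distrib_right mult.assoc algebra_simps)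
qed

lemma Hk_lin:
  assumes f: "Hk k f" and g: "Hk k g"
  shows "Hk k (\<lambda>x. a * f x + b * g x)"
  unfolding Hk_def
proof (intro conjI allI impI)
  show "sq_int (\<lambda>x. a * f x + b * g x)" using f g by (intro sq_int_lin) (auto simp: Hk_def)
  fix j assume j: "j \<le> k"
  obtain p where p: "sq_int p" "weak_deriv j f p" using f j unfolding Hk_def by blast
  obtain q where q: "sq_int q" "weak_deriv j g q" using g j unfolding Hk_def by blast
  show "\<exists>r. sq_int r \<and> weak_deriv j (\<lambda>x. a * f x + b * g x) r"
    using sq_int_lin[OF p(1) q(1)] weak_deriv_lin[OF p(2) q(2)] by blast
qed

lemma abs_le_half_plus_square: "0 < l \<Longrightarrow> \<bar>a::real\<bar> \<le> l / 2 + a\<^sup>2 / (2 * l)"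
  using zero_le_power2[of "\<bar>a\<bar> - l"]
  by (simp add: field_simps power2_eq_square algebra_simps abs_mult_self_eq)

lemma integral_abs_Icc_le:
  assumes F: "sq_int F" and l: "0 < l"
  shows "(LINT y|lborel. \<bar>F y\<bar> * indicator {a..a+1} y) \<le> l / 2 + (LINT y|lborel. (F y)\<^sup>2) / (2 * l)"
proof -
  have i2: "integrable lborel (\<lambda>y. (F y)\<^sup>2)" using F by (simp add: sq_int_def)
  have "(LINT y|lborel. \<bar>F y\<bar> * indicator {a..a+1} y)
      \<le> (LINT y|lborel. l / 2 * indicator {a..a+1} y + (F y)\<^sup>2 / (2 * l))"
    using abs_le_half_plus_square[OF l, of "F _"] l
    by (intro integral_mono loc_integrable_abs_indicator sq_int_loc_integrable F
        Bochner_Integration.integrable_add integrable_mult_right integrable_divide i2 integrable_indicator_Icc)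
      (auto split: split_indicator)
  also have "\<dots> = l / 2 + (LINT y|lborel. (F y)\<^sup>2) / (2 * l)"
    using i2 by (simp add: integrable_mult_right)
  finally show ?thesis .
qed

lemma abs_le_local_integrals_if_primitive:
  assumes F: "loc_integrable F" and G: "loc_integrable G" and rel: "\<And>x. F x = c + primitive G x"
  shows "\<bar>F x\<bar> \<le> (LINT y|lborel. \<bar>F y\<bar> * indicator {x..x+1} y) + (LINT y|lborel. \<bar>G y\<bar> * indicator {x..x+1} y)"
proof -
  define C where "C = (LINT z|lborel. \<bar>G z\<bar> * indicator {x..x+1} z)"
  have "\<bar>F x\<bar> \<le> \<bar>F y\<bar> + C" if y: "y \<in> {x..x+1}" for y
  proof -
    have "\<bar>primitive G y - primitive G x\<bar> \<le> (LINT z|lborel. \<bar>G z\<bar> * indicator {x..y} z)"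
      using y by (intro primitive_diff_bound[OF G]) auto
    also have "\<dots> \<le> C" unfolding C_def
      using y by (intro integral_mono loc_integrable_abs_indicator[OF G]) (auto split: split_indicator)
    finally show ?thesis using rel[of x] rel[of y] by linarith
  qed
  then have "(LINT y|lborel. \<bar>F x\<bar> * indicator {x..x+1} y)
      \<le> (LINT y|lborel. \<bar>F y\<bar> * indicator {x..x+1} y + C * indicator {x..x+1} y)"
    by (intro integral_mono Bochner_Integration.integrable_add integrable_mult_right
        integrable_indicator_Icc loc_integrable_abs_indicator[OF F]) (auto split: split_indicator)
  then show ?thesis
    using loc_integrable_abs_indicator[OF F, of x "x+1"] by (simp add: C_def)
qed

text \<open>The one-dimensional Sobolev inequality, with the free parameter \<open>l\<close> of an AM-GM estimate.\<close>

lemma abs_le_if_primitive_square_integrable: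
  assumes F: "sq_int F" and G: "sq_int G" and rel: "\<And>x. F x = c + primitive G x" and l: "0 < l"
  shows "\<bar>F x\<bar> \<le> l + ((LINT z|lborel. (F z)\<^sup>2) + (LINT z|lborel. (G z)\<^sup>2)) / l"
proof -
  have nn: "0 \<le> (LINT z|lborel. (F z)\<^sup>2)" "0 \<le> (LINT z|lborel. (G z)\<^sup>2)"
    by (auto intro!: integral_nonneg_AE)
  have "\<bar>F x\<bar> \<le> (l / 2 + (LINT y|lborel. (F y)\<^sup>2) / (2 * l)) + (l / 2 + (LINT y|lborel. (G y)\<^sup>2) / (2 * l))"
    using abs_le_local_integrals_if_primitive[OF sq_int_loc_integrable[OF F] sq_int_loc_integrable[OF G] rel, of x]
      integral_abs_Icc_le[OF F l, of x] integral_abs_Icc_le[OF G l, of x]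
    by linarith
  also have "\<dots> \<le> l + ((LINT z|lborel. (F z)\<^sup>2) + (LINT z|lborel. (G z)\<^sup>2)) / l"
    using nn l by (simp add: field_simps)
  finally show ?thesis .
qed

lemma Hk_continuous_representatives:
  assumes h: "Hk (Suc m) f"
  obtains H where "\<And>j. j \<le> m \<Longrightarrow> AE x in lborel. H j x = wderiv j f x"
    and "\<And>j. j \<le> m \<Longrightarrow> \<exists>c. \<forall>x. H j x = c + primitive (wderiv (Suc j) f) x"
    and "\<And>j x. j < m \<Longrightarrow> (H j has_real_derivative H (Suc j) x) (at x)"
proof -
  have li: "loc_integrable (wderiv j f)" if "j \<le> Suc m" for j
    using Hk_wderiv[OF h that] by (simp add: sq_int_loc_integrable)
  have "\<exists>c. AE x in lborel. wderiv j f x = c + primitive (wderiv (Suc j) f) x" if j: "j \<le> m" for j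
    using j Hk_wderiv[OF h, of j] Hk_wderiv[OF h, of "Suc j"]
    by (metis weak_deriv1_imp_AE_eq_primitive weak_deriv_Suc_imp_weak_deriv1 li le_SucI Suc_le_mono)
  then obtain c where c: "\<And>j. j \<le> m \<Longrightarrow> AE x in lborel. wderiv j f x = c j + primitive (wderiv (Suc j) f) x"
    by metis
  define H where "H j x = c j + primitive (wderiv (Suc j) f) x" for j x
  have ae: "AE x in lborel. H j x = wderiv j f x" if "j \<le> m" for j
    using c[OF that] by (auto simp: H_def elim: eventually_mono)
  have cont: "continuous_on UNIV (H j)" if "j \<le> m" for j
    unfolding H_def using li[of "Suc j"] that by (intro continuous_intros continuous_primitive) auto
  have d: "(H j has_real_derivative H (Suc j) x) (at x)" if j: "j < m" for j x
  proof -
    have "primitive (wderiv (Suc j) f) = primitive (H (Suc j))"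
    proof (rule primitive_cong_AE)
      show "loc_integrable (wderiv (Suc j) f)" using j li by simp
      show "loc_integrable (H (Suc j))" using j cont by (intro loc_integrable_continuous) simp
      show "AE x in lborel. wderiv (Suc j) f x = H (Suc j) x"
        using j ae[of "Suc j"] by (auto elim: eventually_mono)
    qed
    then have "H j = (\<lambda>x. c j + primitive (H (Suc j)) x)" by (simp add: H_def[of j] fun_eq_iff)
    moreover have "((\<lambda>x. c j + primitive (H (Suc j)) x) has_real_derivative H (Suc j) x) (at x)"
      using has_real_derivative_primitive[OF cont, of "Suc j" x] j by (auto intro!: derivative_eq_intros)
    ultimately show ?thesis by simp
  qed
  show ?thesis
  proof (rule that[of H])
    show "\<exists>c. \<forall>x. H j x = c + primitive (wderiv (Suc j) f) x" for j by (auto simp: H_def)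
  qed (use ae d in auto)
qed

definition classical_derivs :: "nat \<Rightarrow> (real \<Rightarrow> real) \<Rightarrow> bool" where
  "classical_derivs m f \<longleftrightarrow>
     (\<forall>j x. j < m \<longrightarrow> ((deriv ^^ j) f has_real_derivative (deriv ^^ Suc j) f x) (at x))"

lemma deriv_funpow_lin:
  assumes f: "classical_derivs m f" and g: "classical_derivs m g" and j: "j \<le> m"
  shows "(deriv ^^ j) (\<lambda>x. a * f x + b * g x) = (\<lambda>x. a * (deriv ^^ j) f x + b * (deriv ^^ j) g x)"
  using j
proof (induction j)
  case (Suc j)
  have "((\<lambda>x. a * (deriv ^^ j) f x + b * (deriv ^^ j) g x) has_real_derivative
      a * (deriv ^^ Suc j) f x + b * (deriv ^^ Suc j) g x) (at x)" for x
    using f g Suc.prems unfolding classical_derivs_def by (intro DERIV_add DERIV_cmult) auto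
  then have "deriv (\<lambda>x. a * (deriv ^^ j) f x + b * (deriv ^^ j) g x)
      = (\<lambda>x. a * (deriv ^^ Suc j) f x + b * (deriv ^^ Suc j) g x)"
    by (rule deriv_eqI)
  with Suc show ?case by simp
qed simp

lemma classical_derivs_lin:
  assumes f: "classical_derivs m f" and g: "classical_derivs m g"
  shows "classical_derivs m (\<lambda>x. a * f x + b * g x)"
  unfolding classical_derivs_def
proof (intro allI impI)
  fix j x assume j: "j < m"
  have "((\<lambda>x. a * (deriv ^^ j) f x + b * (deriv ^^ j) g x) has_real_derivative
      a * (deriv ^^ Suc j) f x + b * (deriv ^^ Suc j) g x) (at x)"
    using f g j unfolding classical_derivs_def by (intro DERIV_add DERIV_cmult) auto
  then show "((deriv ^^ j) (\<lambda>x. a * f x + b * g x) has_real_derivative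
      (deriv ^^ Suc j) (\<lambda>x. a * f x + b * g x) x) (at x)"
    unfolding deriv_funpow_lin[OF f g less_imp_le[OF j]] deriv_funpow_lin[OF f g Suc_leI[OF j]] .
qed

lemma deriv_funpow_diff:
  assumes "classical_derivs m f" "classical_derivs m g" "j \<le> m"
  shows "(deriv ^^ j) (\<lambda>x. f x - g x) = (\<lambda>x. (deriv ^^ j) f x - (deriv ^^ j) g x)"
  using deriv_funpow_lin[OF assms, of 1 "-1"] by simp

lemma classical_derivs_diff:
  "classical_derivs m f \<Longrightarrow> classical_derivs m g \<Longrightarrow> classical_derivs m (\<lambda>x. f x - g x)"
  using classical_derivs_lin[of m f g 1 "-1"] by simp

lemma Hk_diff: "Hk k f \<Longrightarrow> Hk k g \<Longrightarrow> Hk k (\<lambda>x. f x - g x)"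
  using Hk_lin[of k f g 1 "-1"] by simp

lemma Hk_classical_derivs:
  assumes h: "Hk (Suc m) f" and c: "continuous_on UNIV f"
  shows "classical_derivs m f"
    and "\<And>j. j \<le> m \<Longrightarrow> AE x in lborel. (deriv ^^ j) f x = wderiv j f x"
    and "\<And>j. j \<le> m \<Longrightarrow> \<exists>c. \<forall>x. (deriv ^^ j) f x = c + primitive (wderiv (Suc j) f) x"
proof -
  obtain H where ae: "\<And>j. j \<le> m \<Longrightarrow> AE x in lborel. H j x = wderiv j f x"
    and prim: "\<And>j. j \<le> m \<Longrightarrow> \<exists>c. \<forall>x. H j x = c + primitive (wderiv (Suc j) f) x"
    and d: "\<And>j x. j < m \<Longrightarrow> (H j has_real_derivative H (Suc j) x) (at x)"
    using Hk_continuous_representatives[OF h] by blast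
  have cH: "continuous_on UNIV (H 0)"
    using prim[of 0] Hk_wderiv[OF h, of 1]
    by (auto intro!: continuous_intros continuous_primitive sq_int_loc_integrable
        simp: fun_eq_iff[symmetric] cong: continuous_on_cong)
  have "AE x in lborel. H 0 x = f x"
    using ae[of 0] weak_deriv_0_imp_AE_eq[of f "wderiv 0 f"] Hk_wderiv[OF h, of 0] h
    by (auto simp: Hk_def elim: eventually_elim2)
  then have "H 0 = f" using continuous_AE_eq_imp_eq[OF cH c] by blast
  have H: "(deriv ^^ j) f = H j" if "j \<le> m" for j
    using that
  proof (induction j)
    case 0
    show ?case using \<open>H 0 = f\<close> by simp
  next
    case (Suc j)
    have "deriv (H j) = H (Suc j)" using Suc.prems by (intro deriv_eqI d) simp
    with Suc show ?case by simp
  qed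
  show "classical_derivs m f"
    unfolding classical_derivs_def
  proof (intro allI impI)
    fix j x assume "j < m"
    then show "((deriv ^^ j) f has_real_derivative (deriv ^^ Suc j) f x) (at x)"
      using d[of j x] H[of j] H[of "Suc j"] by simp
  qed
  show "AE x in lborel. (deriv ^^ j) f x = wderiv j f x" if "j \<le> m" for j
    using ae H that by simp
  show "\<exists>c. \<forall>x. (deriv ^^ j) f x = c + primitive (wderiv (Suc j) f) x" if "j \<le> m" for j
    using prim H that by simp
qed

lemma Hk_continuous_representative:
  assumes h: "Hk (Suc m) f"
  obtains F where "continuous_on UNIV F" "AE x in lborel. f x = F x"
proof (rule Hk_continuous_representatives[OF h])
  fix H assume ae: "\<And>j. j \<le> m \<Longrightarrow> AE x in lborel. H j x = wderiv j f x"
    and prim: "\<And>j. j \<le> m \<Longrightarrow> \<exists>c. \<forall>x. H j x = c + primitive (wderiv (Suc j) f) x"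
  obtain c where c: "\<And>x. H 0 x = c + primitive (wderiv 1 f) x" using prim[of 0] by auto
  have "continuous_on UNIV (\<lambda>x. c + primitive (wderiv 1 f) x)"
    using Hk_wderiv[OF h, of 1] by (intro continuous_on_add continuous_on_const continuous_primitive
        sq_int_loc_integrable) simp
  then have cont: "continuous_on UNIV (H 0)" by (simp add: c)
  have "AE x in lborel. f x = wderiv 0 f x"
    using h Hk_wderiv[OF h, of 0] by (intro weak_deriv_0_imp_AE_eq) (simp_all add: Hk_def)
  with ae[OF le0] have "AE x in lborel. f x = H 0 x" by eventually_elim simp
  with cont show thesis by (rule that)
qed

lemma classical_derivs_mono: "classical_derivs m f \<Longrightarrow> k \<le> m \<Longrightarrow> classical_derivs k f"
  unfolding classical_derivs_def by auto

lemma Hk_norm_eq_0_imp_AE_zero: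
  assumes h: "Hk k f" and n: "Hk_norm k f = 0"
  shows "AE x in lborel. f x = 0"
proof -
  have w: "sq_int (wderiv 0 f)" "weak_deriv 0 f (wderiv 0 f)" using Hk_wderiv[OF h, of 0] by auto
  have "(LINT x|lborel. (wderiv 0 f x)\<^sup>2) \<le> 0"
    using integral_square_wderiv_le_Hk_norm[of 0 k f] n by simp
  moreover have "0 \<le> (LINT x|lborel. (wderiv 0 f x)\<^sup>2)" by (intro integral_nonneg_AE) simp
  moreover have "integrable lborel (\<lambda>x. (wderiv 0 f x)\<^sup>2)" using w(1) by (simp add: sq_int_def)
  ultimately have "AE x in lborel. (wderiv 0 f x)\<^sup>2 = 0"
    using integral_nonneg_eq_0_iff_AE[of lborel "\<lambda>x. (wderiv 0 f x)\<^sup>2"] by simp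
  moreover have "AE x in lborel. f x = wderiv 0 f x"
    using h w by (intro weak_deriv_0_imp_AE_eq) (auto simp: Hk_def)
  ultimately show ?thesis by eventually_elim simp
qed

lemma Hk_derivs_continuous:
  assumes "Hk (Suc m) f" "continuous_on UNIV f" "j \<le> m"
  shows "continuous_on UNIV ((deriv ^^ j) f)"
proof -
  obtain c where "\<And>x. (deriv ^^ j) f x = c + primitive (wderiv (Suc j) f) x"
    using Hk_classical_derivs(3)[OF assms] by blast
  moreover have "continuous_on UNIV (\<lambda>x. c + primitive (wderiv (Suc j) f) x)"
    using Hk_wderiv[OF assms(1), of "Suc j"] assms(3)
    by (intro continuous_intros continuous_primitive sq_int_loc_integrable) auto
  ultimately show ?thesis by (simp add: fun_eq_iff[symmetric])
qed

lemma Hk_derivs_bound: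
  assumes h: "Hk (Suc m) f" and c: "continuous_on UNIV f" and j: "j \<le> m" and l: "0 < l"
  shows "\<bar>(deriv ^^ j) f x\<bar> \<le> l + 2 * (Hk_norm (Suc m) f)\<^sup>2 / l"
proof -
  obtain c0 where rel: "\<And>x. (deriv ^^ j) f x = c0 + primitive (wderiv (Suc j) f) x"
    using Hk_classical_derivs(3)[OF h c j] by blast
  have wj: "sq_int (wderiv j f)" and wSj: "sq_int (wderiv (Suc j) f)"
    using Hk_wderiv[OF h] j by auto
  have "(deriv ^^ j) f \<in> borel_measurable lborel"
    using Hk_derivs_continuous[OF h c j] by (simp add: borel_measurable_continuous_onI)
  note sq = sq_int_cong_AE[OF wj this Hk_classical_derivs(2)[OF h c j, THEN AE_symmetric]]
  have "\<bar>(deriv ^^ j) f x\<bar>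
      \<le> l + ((LINT z|lborel. ((deriv ^^ j) f z)\<^sup>2) + (LINT z|lborel. (wderiv (Suc j) f z)\<^sup>2)) / l"
    by (rule abs_le_if_primitive_square_integrable[OF sq(1) wSj rel l])
  also have "\<dots> \<le> l + 2 * (Hk_norm (Suc m) f)\<^sup>2 / l"
    using integral_square_wderiv_le_Hk_norm[of j "Suc m" f] integral_square_wderiv_le_Hk_norm[of "Suc j" "Suc m" f]
      j l sq(2) by (intro add_left_mono divide_right_mono) auto
  finally show ?thesis .
qed

lemma Hk_norm_tendsto_0_imp_uniform:
  assumes lim: "((\<lambda>s. Hk_norm (Suc m) (v s)) \<longlongrightarrow> 0) F"
    and ev: "\<forall>\<^sub>F s in F. Hk (Suc m) (v s) \<and> continuous_on UNIV (v s)" and e: "0 < e"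
  shows "\<forall>\<^sub>F s in F. \<forall>j\<le>m. \<forall>x. \<bar>(deriv ^^ j) (v s) x\<bar> < e"
proof -
  have "\<forall>\<^sub>F s in F. Hk_norm (Suc m) (v s) < e / 4" by (rule order_tendstoD(2)[OF lim]) (use e in simp)
  with ev show ?thesis
  proof eventually_elim
  case (elim s)
  let ?N = "Hk_norm (Suc m) (v s)"
  have "?N\<^sup>2 < (e / 4)\<^sup>2" using elim Hk_norm_nonneg by (intro power_strict_mono) auto
  then have "2 * ?N\<^sup>2 / (e / 2) < 2 * (e / 4)\<^sup>2 / (e / 2)"
    using e by (intro divide_strict_right_mono) auto
  also have "\<dots> = e / 4" using e by (simp add: power2_eq_square field_simps)
  finally have "e / 2 + 2 * ?N\<^sup>2 / (e / 2) < e" using e by linarith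
  show ?case
  proof (intro allI impI)
    fix j x assume "j \<le> m"
    then have "\<bar>(deriv ^^ j) (v s) x\<bar> \<le> e / 2 + 2 * ?N\<^sup>2 / (e / 2)"
      using elim e by (intro Hk_derivs_bound) auto
    with \<open>e / 2 + 2 * ?N\<^sup>2 / (e / 2) < e\<close> show "\<bar>(deriv ^^ j) (v s) x\<bar> < e" by linarith
  qed
  qed
qed

lemma Hk_norm_tendsto_0_imp_uniform_AE:
  assumes lim: "((\<lambda>s. Hk_norm (Suc m) (w s)) \<longlongrightarrow> 0) F"
    and ev: "\<forall>\<^sub>F s in F. Hk (Suc m) (v s) \<and> continuous_on UNIV (v s) \<and>
      w s \<in> borel_measurable lborel \<and> (AE x in lborel. w s x = v s x)"
    and e: "0 < e"
  shows "\<forall>\<^sub>F s in F. \<forall>j\<le>m. \<forall>x. \<bar>(deriv ^^ j) (v s) x\<bar> < e"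
proof (rule Hk_norm_tendsto_0_imp_uniform[OF _ _ e])
  have "\<forall>\<^sub>F s in F. Hk_norm (Suc m) (w s) = Hk_norm (Suc m) (v s)"
    using ev by (rule eventually_mono) (auto intro: Hk_norm_cong_AE continuous_imp_measurable_lborel)
  with lim show "((\<lambda>s. Hk_norm (Suc m) (v s)) \<longlongrightarrow> 0) F" by (rule Lim_transform_eventually)
  show "\<forall>\<^sub>F s in F. Hk (Suc m) (v s) \<and> continuous_on UNIV (v s)"
    using ev by (rule eventually_mono) simp
qed

lemma C1_onE:
  assumes "C1_on U f"
  obtains fx ft where "continuous_on U fx" "continuous_on U ft"
    "\<And>p. p \<in> U \<Longrightarrow> (f has_derivative (\<lambda>(h, k). fx p * h + ft p * k)) (at p)"
  using assms unfolding C1_on_def by blast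

lemma C1_on_imp_continuous_on: "C1_on U f \<Longrightarrow> continuous_on U f"
  by (erule C1_onE) (auto intro!: continuous_at_imp_continuous_on has_derivative_continuous)

lemma C1_on_const: "C1_on U (\<lambda>p. c)"
  unfolding C1_on_def by (intro exI[of _ "\<lambda>_. 0"]) (auto intro: has_derivative_eq_rhs[OF has_derivative_const])

lemma C1_on_add:
  assumes "C1_on U f" "C1_on U g"
  shows "C1_on U (\<lambda>p. f p + g p)"
proof -
  obtain fx ft gx gt where c: "continuous_on U fx" "continuous_on U ft" "continuous_on U gx" "continuous_on U gt"
    and d: "\<And>p. p \<in> U \<Longrightarrow> (f has_derivative (\<lambda>(h, k). fx p * h + ft p * k)) (at p)"
      "\<And>p. p \<in> U \<Longrightarrow> (g has_derivative (\<lambda>(h, k). gx p * h + gt p * k)) (at p)"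
    using assms by (auto elim!: C1_onE)
  have "((\<lambda>p. f p + g p) has_derivative (\<lambda>(h, k). (fx p + gx p) * h + (ft p + gt p) * k)) (at p)"
    if "p \<in> U" for p
    using has_derivative_add[OF d(1)[OF that] d(2)[OF that]]
    by (rule has_derivative_eq_rhs) (auto simp: algebra_simps)
  with c show ?thesis unfolding C1_on_def by (blast intro: continuous_on_add)
qed

lemma C1_on_mult:
  assumes "C1_on U f" "C1_on U g"
  shows "C1_on U (\<lambda>p. f p * g p)"
proof -
  obtain fx ft gx gt where c: "continuous_on U fx" "continuous_on U ft" "continuous_on U gx" "continuous_on U gt"
    and d: "\<And>p. p \<in> U \<Longrightarrow> (f has_derivative (\<lambda>(h, k). fx p * h + ft p * k)) (at p)"
      "\<And>p. p \<in> U \<Longrightarrow> (g has_derivative (\<lambda>(h, k). gx p * h + gt p * k)) (at p)"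
    using assms by (auto elim!: C1_onE)
  have "((\<lambda>p. f p * g p) has_derivative
      (\<lambda>(h, k). (fx p * g p + f p * gx p) * h + (ft p * g p + f p * gt p) * k)) (at p)"
    if "p \<in> U" for p
    using has_derivative_mult[OF d(1)[OF that] d(2)[OF that]]
    by (rule has_derivative_eq_rhs) (auto simp: algebra_simps)
  moreover have "continuous_on U (\<lambda>p. fx p * g p + f p * gx p)" "continuous_on U (\<lambda>p. ft p * g p + f p * gt p)"
    using c C1_on_imp_continuous_on[OF assms(1)] C1_on_imp_continuous_on[OF assms(2)]
    by (auto intro!: continuous_intros)
  ultimately show ?thesis unfolding C1_on_def by blast
qed

lemma C1_on_lin:
  "C1_on U f \<Longrightarrow> C1_on U g \<Longrightarrow> C1_on U (\<lambda>p. a * f p + b * g p)"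
  by (intro C1_on_add C1_on_mult C1_on_const)

lemma C1_on_diff: "C1_on U f \<Longrightarrow> C1_on U g \<Longrightarrow> C1_on U (\<lambda>p. f p - g p)"
  using C1_on_lin[of U f g 1 "-1"] by simp

lemma C1_on_from_partials:
  fixes f fx ft :: "real \<times> real \<Rightarrow> real"
  assumes S: "open S" "convex S"
    and cx: "continuous_on (UNIV \<times> S) fx" and ct: "continuous_on (UNIV \<times> S) ft"
    and dx: "\<And>x t. t \<in> S \<Longrightarrow> ((\<lambda>x. f (x, t)) has_real_derivative fx (x, t)) (at x)"
    and dt: "\<And>x t. t \<in> S \<Longrightarrow> ((\<lambda>t. f (x, t)) has_real_derivative ft (x, t)) (at t)"
  shows "C1_on (UNIV \<times> S) f"
  unfolding C1_on_def
proof (intro exI conjI ballI)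
  show "continuous_on (UNIV \<times> S) fx" "continuous_on (UNIV \<times> S) ft" by fact+
  fix p :: "real \<times> real" assume p: "p \<in> UNIV \<times> S"
  obtain x t :: real where pe: "p = (x, t)" by (cases p)
  have t: "t \<in> S" using p pe by auto
  have "((\<lambda>(x, y). f (x, y)) has_derivative
      (\<lambda>(h, k). fx (x, t) * h + blinfun_apply (blinfun_mult_right (ft (x, t))) k))
      (at (x, t) within UNIV \<times> S)"
  proof (rule has_derivative_partialsI[where fy="\<lambda>x y. blinfun_mult_right (ft (x, y))"])
    show "((\<lambda>x. f (x, t)) has_derivative (*) (fx (x, t))) (at x within UNIV)"
      using dx[OF t, of x] by (simp add: has_field_derivative_def)
    fix x' y assume "y \<in> S"
    then show "((\<lambda>y. f (x', y)) has_derivative blinfun_apply (blinfun_mult_right (ft (x', y)))) (at y within S)"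
      using dt by (auto simp: has_field_derivative_def intro: has_derivative_at_withinI)
  next
    have "continuous (at (x, t) within UNIV \<times> S) ft"
      using ct p pe by (simp add: continuous_on_eq_continuous_within)
    then show "continuous (at (x, t) within UNIV \<times> S) (\<lambda>(x, y). blinfun_mult_right (ft (x, y)))"
      by (simp add: split_beta' continuous_intros)
  qed (use t S in auto)
  moreover have "at (x, t) within UNIV \<times> S = at (x, t)"
    using t S by (intro at_within_open) (auto intro: open_Times)
  ultimately show "(f has_derivative (\<lambda>(h, k). fx p * h + ft p * k)) (at p)"
    using pe by (simp add: split_beta')
qed

lemma continuous_on_Times_if_locally_uniform:
  fixes Z :: "real \<Rightarrow> real \<Rightarrow> real"
  assumes c: "\<And>t. t \<in> S \<Longrightarrow> continuous_on UNIV (Z t)"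
    and u: "\<And>t e. t \<in> S \<Longrightarrow> 0 < e \<Longrightarrow> \<forall>\<^sub>F s in at t. \<forall>x. \<bar>Z s x - Z t x\<bar> < e"
  shows "continuous_on (UNIV \<times> S) (\<lambda>p. Z (snd p) (fst p))"
proof (rule continuous_at_imp_continuous_on, safe)
  fix x0 t0 assume t0: "t0 \<in> S"
  show "isCont (\<lambda>p. Z (snd p) (fst p)) (x0, t0)"
    unfolding continuous_at_eps_delta
  proof (intro allI impI)
    fix e :: real assume e: "0 < e"
    obtain d1 where d1: "0 < d1" "\<And>s. s \<noteq> t0 \<Longrightarrow> dist s t0 < d1 \<Longrightarrow> \<forall>x. \<bar>Z s x - Z t0 x\<bar> < e/2"
      using u[OF t0, of "e/2"] e unfolding eventually_at by auto
    have "isCont (Z t0) x0" using c[OF t0] by (simp add: continuous_on_eq_continuous_at)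
    then obtain d2 where d2: "0 < d2" "\<And>x. dist x x0 < d2 \<Longrightarrow> dist (Z t0 x) (Z t0 x0) < e/2"
      unfolding continuous_at_eps_delta using e by (meson half_gt_zero)
    show "\<exists>d>0. \<forall>y. dist y (x0, t0) < d \<longrightarrow> dist (Z (snd y) (fst y)) (Z (snd (x0, t0)) (fst (x0, t0))) < e"
    proof (intro exI[of _ "min d1 d2"] conjI allI impI)
      show "0 < min d1 d2" using d1 d2 by simp
      fix y :: "real \<times> real" assume y: "dist y (x0, t0) < min d1 d2"
      obtain x s where ys: "y = (x, s)" by (cases y)
      have "dist x x0 < d2" "dist s t0 < d1"
        using y ys by (auto simp: dist_Pair_Pair intro: le_less_trans[OF real_sqrt_sum_squares_ge1]
            le_less_trans[OF real_sqrt_sum_squares_ge2])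
      then have "\<bar>Z s x - Z t0 x\<bar> < e/2" "\<bar>Z t0 x - Z t0 x0\<bar> < e/2"
        using d1(2)[of s] d2(2)[of x] e by (cases "s = t0"; auto simp: dist_real_def)+
      then have "\<bar>Z s x - Z t0 x0\<bar> < e" by arith
      then show "dist (Z (snd y) (fst y)) (Z (snd (x0, t0)) (fst (x0, t0))) < e"
        using ys by (simp add: dist_real_def)
    qed
  qed
qed

section \<open>Square integrable solutions of \<open>v'\<^sup>2 - 2 v v' + v v'' = 0\<close>\<close>

lemma not_integrable_if_bounded_below_at_top:
  fixes f :: "real \<Rightarrow> real"
  assumes nn: "\<And>x. 0 \<le> f x" and a: "0 < a" and lb: "\<And>x. x1 \<le> x \<Longrightarrow> a \<le> f x"
  shows "\<not> integrable lborel f"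
proof
  assume i: "integrable lborel f"
  have "real n * a \<le> (LINT x|lborel. f x)" for n
  proof -
    have "real n * a = (LINT x|lborel. a * indicator {x1..x1 + real n} x)" by simp
    also have "\<dots> \<le> (LINT x|lborel. f x)"
      using lb nn i by (intro integral_mono integrable_mult_right integrable_indicator_Icc)
        (auto split: split_indicator)
    finally show ?thesis .
  qed
  moreover obtain n :: nat where "(LINT x|lborel. f x) / a < real n" using reals_Archimedean2 by blast
  ultimately show False using a by (auto simp: field_simps not_le[symmetric])
qed

text \<open>\<open>(v'\<^sup>2 - 2 v v' + v v'') e\<^sup>-\<^sup>2\<^sup>x\<close> is the derivative of \<open>v v' e\<^sup>-\<^sup>2\<^sup>x\<close>.\<close>

lemma square_eq_exp_if_F_zero:
  fixes v v1 v2 :: "real \<Rightarrow> real"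
  assumes d1: "\<And>x. (v has_real_derivative v1 x) (at x)" and d2: "\<And>x. (v1 has_real_derivative v2 x) (at x)"
    and eq: "\<And>x. (v1 x)\<^sup>2 - 2 * v x * v1 x + v x * v2 x = 0"
  shows "\<exists>C D. \<forall>x. (v x)\<^sup>2 = C * exp (2 * x) + D"
proof -
  define C where "C = v 0 * v1 0"
  have "((\<lambda>x. v x * v1 x * exp (- 2 * x)) has_real_derivative
      ((v1 x)\<^sup>2 - 2 * v x * v1 x + v x * v2 x) * exp (- 2 * x)) (at x)" for x
    by (rule derivative_eq_intros d1 d2 refl | simp add: power2_eq_square algebra_simps)+
  then have "v x * v1 x * exp (- 2 * x) = v 0 * v1 0 * exp (- 2 * 0)" for x
    using eq by (intro DERIV_isconst_all) auto
  then have "v x * v1 x * exp (- 2 * x) * exp (2 * x) = C * exp (2 * x)" for x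
    by (simp add: C_def)
  then have vv1: "v x * v1 x = C * exp (2 * x)" for x
    by (simp add: mult.assoc exp_add[symmetric])
  have "((\<lambda>x. (v x)\<^sup>2 - C * exp (2 * x)) has_real_derivative 2 * (v x * v1 x) - 2 * (C * exp (2 * x))) (at x)"
    for x by (rule derivative_eq_intros d1 refl | simp add: power2_eq_square algebra_simps)+
  then have "(v x)\<^sup>2 - C * exp (2 * x) = (v 0)\<^sup>2 - C * exp (2 * 0)" for x
    using vv1 by (intro DERIV_isconst_all) auto
  then show ?thesis by (intro exI[of _ C] exI[of _ "(v 0)\<^sup>2 - C"]) (simp add: algebra_simps)
qed

lemma zero_if_square_eq_exp_integrable:
  fixes v :: "real \<Rightarrow> real"
  assumes vsq: "\<And>x. (v x)\<^sup>2 = C * exp (2 * x) + D" and i: "integrable lborel (\<lambda>x. (v x)\<^sup>2)"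
  shows "v x = 0"
proof -
  have ex: "2 * x \<le> exp (2 * x)" for x :: real
    using exp_ge_add_one_self[of "2 * x"] by linarith
  consider "C < 0" | "C > 0" | "C = 0" "D > 0" | "C = 0" "D \<le> 0" by linarith
  then show ?thesis
  proof cases
    case 1
    define x1 where "x1 = (\<bar>D\<bar> + 1) / (- 2 * C)"
    have "C * exp (2 * x1) \<le> C * (2 * x1)" using 1 ex[of x1] by (intro mult_left_mono_neg) auto
    also have "\<dots> = - (\<bar>D\<bar> + 1)" using 1 by (simp add: x1_def field_simps)
    finally have "(v x1)\<^sup>2 < 0" using vsq[of x1] by linarith
    then show ?thesis by simp
  next
    case 2
    define x1 where "x1 = (\<bar>D\<bar> + 1) / (2 * C)"
    have "1 \<le> (v x)\<^sup>2" if "x1 \<le> x" for x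
    proof -
      have "C * (2 * x1) \<le> C * exp (2 * x)" using 2 that ex[of x] by (intro mult_left_mono) auto
      moreover have "C * (2 * x1) = \<bar>D\<bar> + 1" using 2 by (simp add: x1_def field_simps)
      ultimately show ?thesis using vsq[of x] by linarith
    qed
    then show ?thesis using not_integrable_if_bounded_below_at_top[of _ 1 x1] i by auto
  next
    case 3
    then show ?thesis using not_integrable_if_bounded_below_at_top[of _ D 0] i vsq by auto
  next
    case 4
    then show ?thesis using vsq[of x] zero_le_power2[of "v x"] by simp
  qed
qed

section \<open>Regularity of solutions in \<open>\<B>\<close>\<close>

definition Iv_interior :: "ereal \<Rightarrow> real set" where
  "Iv_interior T = {t. 0 < t \<and> ereal t < T}"

lemma Iv_interior_cases:
  obtains "Iv_interior T = {}" | "Iv_interior T = {0<..}" | r where "Iv_interior T = {0<..<r}"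
proof (cases T)
  case (real r)
  then have "Iv_interior T = {0<..<r}" by (auto simp: Iv_interior_def)
  then show ?thesis by (rule that(3))
next
  case PInf
  then have "Iv_interior T = {0<..}" by (auto simp: Iv_interior_def)
  then show ?thesis by (rule that(2))
next
  case MInf
  then have "Iv_interior T = {}" by (auto simp: Iv_interior_def)
  then show ?thesis by (rule that(1))
qed

lemma open_Iv_interior: "open (Iv_interior T)"
  by (cases T rule: Iv_interior_cases) simp_all

lemma convex_Iv_interior: "convex (Iv_interior T)"
  by (cases T rule: Iv_interior_cases) (simp_all add: convex_real_interval)

lemma Iv_interior_subset: "Iv_interior T \<subseteq> Iv T"
  by (auto simp: Iv_interior_def Iv_def)

lemma at_within_Iv: "t \<in> Iv_interior T \<Longrightarrow> at t within Iv T = at t"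
  by (rule at_within_open_subset[OF _ open_Iv_interior Iv_interior_subset])

lemma eventually_in_Iv: "\<forall>\<^sub>F s in at t within Iv T. s \<in> Iv T \<and> s \<noteq> t"
  unfolding eventually_at_filter by simp

lemma Udom_eq: "Udom T = UNIV \<times> Iv_interior T"
  by (auto simp: Udom_def Iv_interior_def)

lemma open_Udom: "open (Udom T)"
  unfolding Udom_eq by (intro open_Times open_UNIV open_Iv_interior)

context
  fixes T :: ereal and u :: "real \<Rightarrow> real \<Rightarrow> real"
  assumes B: "Bsp T u"
begin

lemma cont_Hk_u: "cont_Hk 4 (Iv T) u"
  using B by (simp add: Bsp_def)

lemma Hk_u: "t \<in> Iv T \<Longrightarrow> Hk 4 (u t)"
  using cont_Hk_u unfolding cont_Hk_def by simp

lemma continuous_u: "t \<in> Iv T \<Longrightarrow> continuous_on UNIV (u t)"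
  using B unfolding Bsp_def by simp

lemma classical_derivs_u: "t \<in> Iv T \<Longrightarrow> classical_derivs 3 (u t)"
  using Hk_classical_derivs(1)[of 3 "u t"] Hk_u continuous_u by simp

definition ux :: "nat \<Rightarrow> real \<Rightarrow> real \<Rightarrow> real" where
  "ux j t = (deriv ^^ j) (u t)"

lemma continuous_ux: "t \<in> Iv T \<Longrightarrow> j \<le> 3 \<Longrightarrow> continuous_on UNIV (ux j t)"
  unfolding ux_def using Hk_derivs_continuous[of 3 "u t" j] Hk_u continuous_u by simp

lemma has_real_derivative_ux: "t \<in> Iv T \<Longrightarrow> j < 3 \<Longrightarrow> (ux j t has_real_derivative ux (Suc j) t x) (at x)"
  using classical_derivs_u unfolding ux_def classical_derivs_def by blast

text \<open>The \<open>H\<^sup>3\<close>-valued time derivative \<open>u_dt t\<close> is only determined almost everywhere;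
  \<open>ut t\<close> is its continuous representative.\<close>

definition u_dt :: "real \<Rightarrow> real \<Rightarrow> real" where
  "u_dt = (SOME w. time_deriv_Hk 3 (Iv T) u w \<and> cont_Hk 3 (Iv T) w)"

lemma u_dt: "time_deriv_Hk 3 (Iv T) u u_dt \<and> cont_Hk 3 (Iv T) u_dt"
proof -
  have "\<exists>w. time_deriv_Hk 3 (Iv T) u w \<and> cont_Hk 3 (Iv T) w"
    using B unfolding Bsp_def C1_Hk_def by blast
  then show ?thesis unfolding u_dt_def by (rule someI_ex)
qed

lemma Hk_u_dt: "t \<in> Iv T \<Longrightarrow> Hk 3 (u_dt t)"
  using conjunct2[OF u_dt] unfolding cont_Hk_def by simp

lemma measurable_u_dt: "t \<in> Iv T \<Longrightarrow> u_dt t \<in> borel_measurable lborel"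
  using Hk_u_dt by (simp add: Hk_def sq_int_def)

definition ut :: "real \<Rightarrow> real \<Rightarrow> real" where
  "ut t = (SOME F. continuous_on UNIV F \<and> (AE x in lborel. u_dt t x = F x))"

lemma ut:
  assumes "t \<in> Iv T"
  shows "continuous_on UNIV (ut t) \<and> (AE x in lborel. u_dt t x = ut t x)"
proof -
  have "Hk (Suc 2) (u_dt t)" using Hk_u_dt[OF assms] by simp
  then obtain F where "continuous_on UNIV F" "AE x in lborel. u_dt t x = F x"
    by (rule Hk_continuous_representative)
  then have "\<exists>F. continuous_on UNIV F \<and> (AE x in lborel. u_dt t x = F x)" by blast
  then show ?thesis unfolding ut_def by (rule someI_ex)
qed

lemma Hk_ut: "t \<in> Iv T \<Longrightarrow> Hk 3 (ut t)"
  using Hk_cong_AE[OF Hk_u_dt _ conjunct2[OF ut]] ut by (simp add: borel_measurable_continuous_onI)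

lemma classical_derivs_ut: "t \<in> Iv T \<Longrightarrow> classical_derivs 2 (ut t)"
  using Hk_classical_derivs(1)[of 2 "ut t"] Hk_ut ut by simp

definition utx :: "nat \<Rightarrow> real \<Rightarrow> real \<Rightarrow> real" where
  "utx j t = (deriv ^^ j) (ut t)"

lemma continuous_utx: "t \<in> Iv T \<Longrightarrow> j \<le> 2 \<Longrightarrow> continuous_on UNIV (utx j t)"
  unfolding utx_def using Hk_derivs_continuous[of 2 "ut t" j] Hk_ut ut by simp

lemma ux_uniform_continuous_in_time:
  assumes t: "t \<in> Iv T" and e: "0 < e"
  shows "\<forall>\<^sub>F s in at t within Iv T. \<forall>j\<le>3. \<forall>x. \<bar>ux j s x - ux j t x\<bar> < e"
proof -
  have "((\<lambda>s. Hk_norm 4 (\<lambda>x. u s x - u t x)) \<longlongrightarrow> 0) (at t within Iv T)"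
    using bspec[OF conjunct2[OF cont_Hk_u[unfolded cont_Hk_def]] t] .
  then have "((\<lambda>s. Hk_norm (Suc 3) (\<lambda>x. u s x - u t x)) \<longlongrightarrow> 0) (at t within Iv T)"
    by simp
  moreover have "\<forall>\<^sub>F s in at t within Iv T. Hk (Suc 3) (\<lambda>x. u s x - u t x) \<and> continuous_on UNIV (\<lambda>x. u s x - u t x)"
    using eventually_in_Iv
  proof eventually_elim
    case (elim s)
    then have s: "s \<in> Iv T" by simp
    have "Hk 4 (\<lambda>x. u s x - u t x)" using Hk_u[OF s] Hk_u[OF t] by (rule Hk_diff)
    moreover have "continuous_on UNIV (\<lambda>x. u s x - u t x)"
      using continuous_u[OF s] continuous_u[OF t] by (rule continuous_on_diff)
    ultimately show ?case by simp
  qed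
  ultimately have "\<forall>\<^sub>F s in at t within Iv T. \<forall>j\<le>3. \<forall>x. \<bar>(deriv ^^ j) (\<lambda>x. u s x - u t x) x\<bar> < e"
    using e by (rule Hk_norm_tendsto_0_imp_uniform)
  with eventually_in_Iv show ?thesis
  proof eventually_elim
    case (elim s)
    show ?case
    proof (intro allI impI)
      fix j :: nat and x assume j: "j \<le> 3"
      have "(deriv ^^ j) (\<lambda>x. u s x - u t x) = (\<lambda>x. ux j s x - ux j t x)"
        unfolding ux_def using elim(1) t j classical_derivs_u by (intro deriv_funpow_diff[where m=3]) auto
      moreover have "\<bar>(deriv ^^ j) (\<lambda>x. u s x - u t x) x\<bar> < e" using elim(2) j by blast
      ultimately show "\<bar>ux j s x - ux j t x\<bar> < e" by simp
    qed
  qed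
qed

lemma utx_uniform_continuous_in_time:
  assumes t: "t \<in> Iv T" and e: "0 < e"
  shows "\<forall>\<^sub>F s in at t within Iv T. \<forall>j\<le>2. \<forall>x. \<bar>utx j s x - utx j t x\<bar> < e"
proof -
  have "((\<lambda>s. Hk_norm 3 (\<lambda>x. u_dt s x - u_dt t x)) \<longlongrightarrow> 0) (at t within Iv T)"
    using bspec[OF conjunct2[OF conjunct2[OF u_dt, unfolded cont_Hk_def]] t] .
  then have "((\<lambda>s. Hk_norm (Suc 2) (\<lambda>x. u_dt s x - u_dt t x)) \<longlongrightarrow> 0) (at t within Iv T)"
    by simp
  moreover have "\<forall>\<^sub>F s in at t within Iv T.
      Hk (Suc 2) (\<lambda>x. ut s x - ut t x) \<and> continuous_on UNIV (\<lambda>x. ut s x - ut t x) \<and>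
      (\<lambda>x. u_dt s x - u_dt t x) \<in> borel_measurable lborel \<and>
      (AE x in lborel. u_dt s x - u_dt t x = ut s x - ut t x)"
    using eventually_in_Iv
  proof eventually_elim
    case (elim s)
    then have s: "s \<in> Iv T" by simp
    have "AE x in lborel. u_dt s x = ut s x" "AE x in lborel. u_dt t x = ut t x"
      using ut[OF s] ut[OF t] by simp_all
    then have "AE x in lborel. u_dt s x - u_dt t x = ut s x - ut t x" by eventually_elim simp
    moreover have "Hk 3 (\<lambda>x. ut s x - ut t x)" using Hk_ut[OF s] Hk_ut[OF t] by (rule Hk_diff)
    moreover have "continuous_on UNIV (\<lambda>x. ut s x - ut t x)"
      using ut[OF s] ut[OF t] by (intro continuous_on_diff) auto
    moreover have "(\<lambda>x. u_dt s x - u_dt t x) \<in> borel_measurable lborel"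
      using measurable_u_dt[OF s] measurable_u_dt[OF t] by (rule borel_measurable_diff)
    ultimately show ?case by simp
  qed
  ultimately have "\<forall>\<^sub>F s in at t within Iv T. \<forall>j\<le>2. \<forall>x. \<bar>(deriv ^^ j) (\<lambda>x. ut s x - ut t x) x\<bar> < e"
    using e by (rule Hk_norm_tendsto_0_imp_uniform_AE)
  with eventually_in_Iv show ?thesis
  proof eventually_elim
    case (elim s)
    show ?case
    proof (intro allI impI)
      fix j :: nat and x assume j: "j \<le> 2"
      have "(deriv ^^ j) (\<lambda>x. ut s x - ut t x) = (\<lambda>x. utx j s x - utx j t x)"
        unfolding utx_def using elim(1) t j classical_derivs_ut by (intro deriv_funpow_diff[where m=2]) auto
      moreover have "\<bar>(deriv ^^ j) (\<lambda>x. ut s x - ut t x) x\<bar> < e" using elim(2) j by blast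
      ultimately show "\<bar>utx j s x - utx j t x\<bar> < e" by simp
    qed
  qed
qed

lemma deriv_funpow_difference_quotient:
  assumes s: "s \<in> Iv T" and t: "t \<in> Iv T" and j: "j \<le> 2"
  shows "(deriv ^^ j) (\<lambda>x. (1 / (s - t)) * (u s x - u t x) + (-1) * ut t x)
    = (\<lambda>x. (1 / (s - t)) * (ux j s x - ux j t x) + (-1) * utx j t x)"
proof -
  have cd: "classical_derivs 2 (u r)" if "r \<in> Iv T" for r
    using classical_derivs_mono[OF classical_derivs_u[OF that]] by simp
  then have "classical_derivs 2 (\<lambda>x. u s x - u t x)"
    using s t by (intro classical_derivs_diff)
  then have "(deriv ^^ j) (\<lambda>x. (1 / (s - t)) * (u s x - u t x) + (-1) * ut t x)
      = (\<lambda>x. (1 / (s - t)) * (deriv ^^ j) (\<lambda>x. u s x - u t x) x + (-1) * (deriv ^^ j) (ut t) x)"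
    using classical_derivs_ut[OF t] j by (rule deriv_funpow_lin)
  moreover have "(deriv ^^ j) (\<lambda>x. u s x - u t x) = (\<lambda>x. ux j s x - ux j t x)"
    unfolding ux_def using cd s t j by (intro deriv_funpow_diff[where m=2]) auto
  ultimately show ?thesis by (simp add: utx_def)
qed

lemma ux_difference_quotient_uniform:
  assumes t: "t \<in> Iv T" and e: "0 < e"
  shows "\<forall>\<^sub>F s in at t within Iv T. \<forall>j\<le>2. \<forall>x. \<bar>(ux j s x - ux j t x) / (s - t) - utx j t x\<bar> < e"
proof -
  define v where "v s x = (1 / (s - t)) * (u s x - u t x) + (-1) * ut t x" for s x
  have "((\<lambda>s. Hk_norm 3 (\<lambda>x. (u s x - u t x) / (s - t) - u_dt t x)) \<longlongrightarrow> 0) (at t within Iv T)"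
    using bspec[OF conjunct1[OF u_dt, unfolded time_deriv_Hk_def] t] by (rule conjunct2)
  then have "((\<lambda>s. Hk_norm (Suc 2) (\<lambda>x. (u s x - u t x) / (s - t) - u_dt t x)) \<longlongrightarrow> 0)
      (at t within Iv T)"
    by simp
  moreover have "\<forall>\<^sub>F s in at t within Iv T. Hk (Suc 2) (v s) \<and> continuous_on UNIV (v s) \<and>
      (\<lambda>x. (u s x - u t x) / (s - t) - u_dt t x) \<in> borel_measurable lborel \<and>
      (AE x in lborel. (u s x - u t x) / (s - t) - u_dt t x = v s x)"
    using eventually_in_Iv
  proof eventually_elim
    case (elim s)
    then have s: "s \<in> Iv T" and st: "s \<noteq> t" by simp_all
    have "Hk 3 (u r)" if "r \<in> Iv T" for r
      using Hk_mono[OF Hk_u[OF that], of 3] by simp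
    then have "Hk 3 (v s)"
      unfolding v_def[abs_def] using s t Hk_ut[OF t] by (intro Hk_lin Hk_diff)
    moreover have "continuous_on UNIV (v s)"
      using continuous_u[OF s] continuous_u[OF t] ut[OF t] unfolding v_def[abs_def]
      by (intro continuous_intros) auto
    moreover have "continuous_on UNIV (\<lambda>x. (u s x - u t x) / (s - t))"
      using continuous_u[OF s] continuous_u[OF t] st by (intro continuous_intros) auto
    then have "(\<lambda>x. (u s x - u t x) / (s - t) - u_dt t x) \<in> borel_measurable lborel"
      by (intro borel_measurable_diff continuous_imp_measurable_lborel measurable_u_dt[OF t])
    moreover have "AE x in lborel. (u s x - u t x) / (s - t) - u_dt t x = v s x"
      using ut[OF t] by (auto simp: v_def elim: eventually_mono)
    ultimately show ?case by simp
  qed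
  ultimately have "\<forall>\<^sub>F s in at t within Iv T. \<forall>j\<le>2. \<forall>x. \<bar>(deriv ^^ j) (v s) x\<bar> < e"
    using e by (rule Hk_norm_tendsto_0_imp_uniform_AE)
  with eventually_in_Iv show ?thesis
  proof eventually_elim
    case (elim s)
    then show ?case
      using deriv_funpow_difference_quotient[of s t] t unfolding v_def[abs_def]
      by (simp add: diff_divide_distrib)
  qed
qed

lemma has_real_derivative_time_ux:
  assumes t: "t \<in> Iv_interior T" and j: "j \<le> 2"
  shows "((\<lambda>s. ux j s x) has_real_derivative utx j t x) (at t)"
  unfolding has_field_derivative_iff
proof (rule tendstoI)
  fix e :: real assume "0 < e"
  from ux_difference_quotient_uniform[OF subsetD[OF Iv_interior_subset t] this]
  show "\<forall>\<^sub>F s in at t. dist ((ux j s x - ux j t x) / (s - t)) (utx j t x) < e"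
    unfolding at_within_Iv[OF t] by (rule eventually_mono) (use j in \<open>auto simp: dist_real_def\<close>)
qed

lemma continuous_on_ux:
  assumes "j \<le> 3"
  shows "continuous_on (UNIV \<times> Iv_interior T) (\<lambda>p. ux j (snd p) (fst p))"
proof (rule continuous_on_Times_if_locally_uniform)
  fix t e :: real assume t: "t \<in> Iv_interior T" and e: "0 < e"
  from ux_uniform_continuous_in_time[OF subsetD[OF Iv_interior_subset t] e]
  show "\<forall>\<^sub>F s in at t. \<forall>x. \<bar>ux j s x - ux j t x\<bar> < e"
    unfolding at_within_Iv[OF t] by (rule eventually_mono) (use assms in auto)
qed (use assms continuous_ux Iv_interior_subset in auto)

lemma continuous_on_utx:
  assumes "j \<le> 2"
  shows "continuous_on (UNIV \<times> Iv_interior T) (\<lambda>p. utx j (snd p) (fst p))"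
proof (rule continuous_on_Times_if_locally_uniform)
  fix t e :: real assume t: "t \<in> Iv_interior T" and e: "0 < e"
  from utx_uniform_continuous_in_time[OF subsetD[OF Iv_interior_subset t] e]
  show "\<forall>\<^sub>F s in at t. \<forall>x. \<bar>utx j s x - utx j t x\<bar> < e"
    unfolding at_within_Iv[OF t] by (rule eventually_mono) (use assms in auto)
qed (use assms continuous_utx Iv_interior_subset in auto)

lemma C1_on_ux:
  assumes j: "j \<le> 2"
  shows "C1_on (Udom T) (\<lambda>p. ux j (snd p) (fst p))"
proof -
  have "continuous_on (UNIV \<times> Iv_interior T) (\<lambda>p. ux (Suc j) (snd p) (fst p))"
    "continuous_on (UNIV \<times> Iv_interior T) (\<lambda>p. utx j (snd p) (fst p))"
    using j by (intro continuous_on_ux continuous_on_utx; simp)+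
  then show ?thesis unfolding Udom_eq
    by (rule C1_on_from_partials[OF open_Iv_interior convex_Iv_interior])
      (use j in \<open>auto intro!: has_real_derivative_ux has_real_derivative_time_ux
        dest: subsetD[OF Iv_interior_subset]\<close>)
qed

lemma mDP_eq: "mDP u = (\<lambda>p. ux 0 (snd p) (fst p) - ux 2 (snd p) (fst p))"
  by (auto simp: fun_eq_iff mDP_def ux_def numeral_2_eq_2)

lemma FDP_eq: "FDP u = (\<lambda>p. ux 1 (snd p) (fst p) * ux 1 (snd p) (fst p)
    - 2 * ux 0 (snd p) (fst p) * ux 1 (snd p) (fst p) + ux 0 (snd p) (fst p) * ux 2 (snd p) (fst p))"
  by (auto simp: fun_eq_iff FDP_def ux_def numeral_2_eq_2 power2_eq_square)

lemma C1_on_mDP: "C1_on (Udom T) (mDP u)"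
  unfolding mDP_eq by (intro C1_on_diff C1_on_ux) auto

lemma C1_on_FDP: "C1_on (Udom T) (FDP u)"
  unfolding FDP_eq by (intro C1_on_add C1_on_diff C1_on_mult C1_on_const C1_on_ux) auto

lemma vanishing_if_FDP_zero:
  assumes z: "\<forall>p\<in>Udom T. FDP u p = 0" and t: "t \<in> Iv_interior T"
  shows "u t x = 0"
proof -
  have tI: "t \<in> Iv T" using t Iv_interior_subset by blast
  have eq: "(ux 1 t x)\<^sup>2 - 2 * ux 0 t x * ux 1 t x + ux 0 t x * ux 2 t x = 0" for x
  proof -
    have "(x, t) \<in> Udom T" using t by (simp add: Udom_eq)
    then have "FDP u (x, t) = 0" using z by blast
    then show ?thesis by (simp add: FDP_eq power2_eq_square)
  qed
  have d1: "(ux 0 t has_real_derivative ux 1 t x) (at x)" for x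
    using has_real_derivative_ux[OF tI, of 0] by simp
  have d2: "(ux 1 t has_real_derivative ux 2 t x) (at x)" for x
    using has_real_derivative_ux[OF tI, of 1] by (simp add: numeral_2_eq_2)
  obtain C D where CD: "\<And>x. (ux 0 t x)\<^sup>2 = C * exp (2 * x) + D"
    using square_eq_exp_if_F_zero[OF d1 d2 eq] by blast
  have "integrable lborel (\<lambda>x. (ux 0 t x)\<^sup>2)"
    using Hk_u[OF tI] by (simp add: ux_def Hk_def sq_int_def)
  then have "ux 0 t x = 0" by (rule zero_if_square_eq_exp_integrable[OF CD])
  then show ?thesis by (simp add: ux_def)
qed

lemma AE_initial_zero_if_vanishing:
  assumes T: "0 < T" and z: "\<And>t x. t \<in> Iv_interior T \<Longrightarrow> u t x = 0"
  shows "AE x in lborel. u 0 x = 0"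
proof -
  have I0: "0 \<in> Iv T" using T by (simp add: Iv_def zero_ereal_def)
  obtain d where d: "0 < ereal d" "ereal d < T" using ereal_dense2[OF T] by blast
  have "{0..d} \<subseteq> Iv T" using d by (auto simp: Iv_def intro: le_less_trans[of _ "ereal d"])
  moreover have "0 islimpt {0..d}" using d by (simp add: islimpt_Icc)
  ultimately have "0 islimpt Iv T" by (rule islimpt_subset[rotated])
  then have nontriv: "at 0 within Iv T \<noteq> bot" by (simp add: trivial_limit_within)
  have "((\<lambda>s. Hk_norm 4 (\<lambda>x. u s x - u 0 x)) \<longlongrightarrow> 0) (at 0 within Iv T)"
    using bspec[OF conjunct2[OF cont_Hk_u[unfolded cont_Hk_def]] I0] .
  moreover have "\<forall>\<^sub>F s in at 0 within Iv T. Hk_norm 4 (\<lambda>x. u s x - u 0 x) = Hk_norm 4 (\<lambda>x. 0 - u 0 x)"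
    using eventually_in_Iv
  proof eventually_elim
    case (elim s)
    then have "s \<in> Iv_interior T" by (auto simp: Iv_def Iv_interior_def)
    then show ?case by (simp add: z)
  qed
  ultimately have "((\<lambda>s. Hk_norm 4 (\<lambda>x. 0 - u 0 x)) \<longlongrightarrow> 0) (at 0 within Iv T)"
    by (rule Lim_transform_eventually)
  then have "Hk_norm 4 (\<lambda>x. 0 - u 0 x) = 0" by (simp add: tendsto_const_iff[OF nontriv])
  moreover have "Hk 4 (\<lambda>x. 0 - u 0 x)"
    using Hk_lin[OF Hk_u[OF I0] Hk_u[OF I0], of 0 "-1"] by simp
  ultimately have "AE x in lborel. 0 - u 0 x = 0" by (rule Hk_norm_eq_0_imp_AE_zero[rotated])
  then show ?thesis by (rule eventually_mono) simp
qed

lemma FDP_nonzero: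
  assumes "0 < T" "\<not> (AE x in lborel. u 0 x = 0)"
  shows "\<exists>p\<in>Udom T. FDP u p \<noteq> 0"
proof (rule ccontr)
  assume "\<not> (\<exists>p\<in>Udom T. FDP u p \<noteq> 0)"
  then have "u t x = 0" if "t \<in> Iv_interior T" for t x
    using that by (intro vanishing_if_FDP_zero) auto
  then have "AE x in lborel. u 0 x = 0" by (rule AE_initial_zero_if_vanishing[OF assms(1)])
  with assms(2) show False by simp
qed

end

text \<open>The coefficient of \<open>dx \<and> dt\<close> in \<open>\<omega>\<^sub>1 \<and> \<omega>\<^sub>2\<close>.\<close>

lemma DP_forms_wedge:
  "f11 u p * f22 \<mu> s u p - f12 u p * f21 \<mu> s u p = - (2 * s * sqrt (1 + \<mu>\<^sup>2)) * FDP u p"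
  by (simp add: f11_def f12_def f21_def f22_def algebra_simps)

lemma C1_on_DP_forms:
  assumes "Bsp T u"
  shows "C1_on (Udom T) (f11 u)" "C1_on (Udom T) (f12 u)"
    "C1_on (Udom T) (f21 \<mu> s u)" "C1_on (Udom T) (f22 \<mu> s u)"
    "C1_on (Udom T) (f31 \<mu> s u)" "C1_on (Udom T) (f32 \<mu> s u)"
  using C1_on_mDP[OF assms] C1_on_FDP[OF assms]
  unfolding f11_def[abs_def] f12_def[abs_def] f21_def[abs_def] f22_def[abs_def] f31_def[abs_def] f32_def[abs_def]
  by (auto intro!: C1_on_add C1_on_mult C1_on_const)

lemma simply_connected_nonvanishing_neighbourhood:
  fixes F :: "'a::real_normed_vector \<Rightarrow> real"
  assumes "continuous_on U F" "open U" "p \<in> U" "F p \<noteq> 0"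
  shows "\<exists>\<Omega>. open \<Omega> \<and> \<Omega> \<noteq> {} \<and> simply_connected \<Omega> \<and> \<Omega> \<subseteq> U \<and> (\<forall>q\<in>\<Omega>. F q \<noteq> 0)"
proof -
  have "open (U \<inter> F -` (- {0}))"
    using assms(1,2) by (intro continuous_open_preimage) auto
  moreover have "p \<in> U \<inter> F -` (- {0})" using assms(3,4) by simp
  ultimately obtain r where "0 < r" "ball p r \<subseteq> U \<inter> F -` (- {0})"
    by (meson openE)
  then show ?thesis
    by (intro exI[of _ "ball p r"]) (auto intro: convex_imp_simply_connected)
qed

theorem corollary2p2:
  fixes u0 :: "real \<Rightarrow> real" and u :: "real \<Rightarrow> real \<Rightarrow> real"
    and T :: ereal and \<mu> s :: real
  assumes "Hk 4 u0"
    and "\<not> (AE x in lborel. u0 x = 0)"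
    and "T > 0"
    and "Bsp T u" and "DP_sol T u" and "AE x in lborel. u 0 x = u0 x"
    and "\<forall>T' v. T < T' \<and> Bsp T' v \<and> DP_sol T' v \<and> (AE x in lborel. v 0 x = u0 x) \<longrightarrow> False"
    and "s = 1 \<or> s = -1"
  shows "generic_DP_sol T \<mu> s u"
proof -
  have "\<not> (AE x in lborel. u 0 x = 0)"
  proof
    assume "AE x in lborel. u 0 x = 0"
    with assms(6) have "AE x in lborel. u0 x = 0" by eventually_elim simp
    with assms(2) show False by contradiction
  qed
  then obtain p where "p \<in> Udom T" "FDP u p \<noteq> 0" using FDP_nonzero[OF assms(4,3)] by blast
  then obtain \<Omega> where \<Omega>: "open \<Omega>" "\<Omega> \<noteq> {}" "simply_connected \<Omega>" "\<Omega> \<subseteq> Udom T"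
    "\<forall>q\<in>\<Omega>. FDP u q \<noteq> 0"
    using simply_connected_nonvanishing_neighbourhood[OF C1_on_imp_continuous_on[OF C1_on_FDP[OF assms(4)]]
        open_Udom] by blast
  have "s \<noteq> 0" "0 < sqrt (1 + \<mu>\<^sup>2)" using assms(8) by (auto simp: add_pos_nonneg)
  with \<Omega> have "\<forall>q\<in>\<Omega>. f11 u q * f22 \<mu> s u q - f12 u q * f21 \<mu> s u q \<noteq> 0"
    by (simp add: DP_forms_wedge)
  with \<Omega> show ?thesis
    unfolding generic_DP_sol_def using assms(4,5) C1_on_DP_forms[OF assms(4)] by blast
qed

end
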